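(* Let $I$ be a compact Hausdorff space and $f_i:\mathbb{R}^m\to\mathbb{R}$, $i\in I$, convex functions such that $i\mapsto f_i(x)$ is continuous on $I$ for each $x$; set $F(i,x):=f_i(x)$, $f(x):=\max_{i\in I}f_i(x)$, $I_f(x):=\{i\in I: f_i(x)=f(x)\}$ and $S_f:=\{x: f(x)\le0\}$. Then the following are equivalent: (i) there exists $\tau\in(0,+\infty)$ such that $\inf\left\{\left|\min_{\|h\|=1}f'(\bar x,h)\right|:\bar x\in\mathrm{bdry}(S_f)\right\}>\tau$ and the following qualification condition (QC) holds: for any sequence $\{z_k\}\subseteq S_f\setminus\mathrm{bdry}(S_f)$ for which there is a sequence $\{x_k\}\subseteq\mathrm{bdry}(S_f)$ with $\lim_{k\to\infty}\frac{f(z_k)-f(x_k)}{\|z_k-x_k\|}=0$, one has $\liminf_{k\to\infty}\left|\min_{\|h\|=1}f'(z_k,h)\right|>\tau$; (ii) there exist constants $c,\varepsilon>0$ such that whenever $G\in C(I\times\mathbb{R}^m,\mathbb{R})$ is such that each $g_i:=G(i,\cdot)$ is convex, and, with $g(x):=\max_{i\in I}g_i(x)$ and $I_g(x):=\{i\in I:g_i(x)=g(x)\}$, one has: $\{z\in\mathrm{bdry}(S_f): f_i(z)=g_i(z)\ \forall i\in I\}\neq\emptyset$; $\sup_{i\in I}\mathrm{Lip}(f_i-g_i)<\varepsilon$; for every $x\in\mathbb{R}^m$, $I_g(x)\subseteq I_f(x)$ whenever $\min_{\|h\|=1}f'(x,h)<0$, and $I_f(x)\subseteq I_g(x)$ whenever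 $\min_{\|h\|=1}f'(x,h)>0$; then $\tau_{\min}(G)\le c$; (iii) there exist constants $c,\varepsilon>0$ such that for all $\bar x\in\mathrm{bdry}(S_f)$ and all $u^*\in\mathbb{R}^m$ with $\|u^*\|\le1$, one has $\tau_{\min}(G)\le c$, where $G\in C(I\times\mathbb{R}^m,\mathbb{R})$ is defined by $G(i,x):=f_i(x)+\varepsilon\langle u^*,x-\bar x\rangle$.
   Context: $\mathbb{R}^m$ carries the Euclidean norm, $d(x,D)=\inf\{\|x-y\|:y\in D\}$ (with $\inf\emptyset=+\infty$), $\mathrm{bdry}(D)$ is the boundary of $D$. For a convex $\varphi$, $\varphi'(x,h):=\lim_{t\to0^+}\frac{\varphi(x+th)-\varphi(x)}{t}$. $\mathrm{Lip}(\phi):=\sup_{u\neq v}\frac{|\phi(u)-\phi(v)|}{\|u-v\|}$. For $G\in C(I\times\mathbb{R}^m,\mathbb{R})$ with $g_i:=G(i,\cdot)$ convex and $g:=\max_{i\in I}g_i$, the solution set is $S_G:=\{x: g_i(x)\le0\ \forall i\in I\}$ and the global error bound modulus is $\tau_{\min}(G):=\inf\{\tau>0: d(x,S_G)\le\tau[g(x)]_+\ \forall x\in\mathbb{R}^m\}$, where $[t]_+=\max\{t,0\}$ and $\inf\emptyset=+\infty$. *)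

theory Defs
  imports "HOL-Analysis.Analysis"
begin

definition maxf :: "'i set \<Rightarrow> ('i \<Rightarrow> 'a \<Rightarrow> real) \<Rightarrow> 'a \<Rightarrow> real" where
  "maxf I F x = (SUP i\<in>I. F i x)"

definition active :: "'i set \<Rightarrow> ('i \<Rightarrow> 'a \<Rightarrow> real) \<Rightarrow> 'a \<Rightarrow> 'i set" where
  "active I F x = {i\<in>I. F i x = maxf I F x}"

definition solset :: "'i set \<Rightarrow> ('i \<Rightarrow> 'a \<Rightarrow> real) \<Rightarrow> 'a set" where
  "solset I F = {x. \<forall>i\<in>I. F i x \<le> 0}"

definition dirder :: "('a::real_normed_vector \<Rightarrow> real) \<Rightarrow> 'a \<Rightarrow> 'a \<Rightarrow> real" where
  "dirder \<phi> x h = Lim (at_right 0) (\<lambda>t. (\<phi> (x + t *\<^sub>R h) - \<phi> x) / t)"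

definition mindir :: "('a::real_normed_vector \<Rightarrow> real) \<Rightarrow> 'a \<Rightarrow> real" where
  "mindir \<phi> x = (INF h\<in>sphere 0 1. dirder \<phi> x h)"

definition Lipc :: "('a::real_normed_vector \<Rightarrow> real) \<Rightarrow> ereal" where
  "Lipc \<phi> = (SUP p\<in>{(u,v). u \<noteq> v}. ereal (\<bar>\<phi> (fst p) - \<phi> (snd p)\<bar> / norm (fst p - snd p)))"

definition setdist :: "'a::metric_space \<Rightarrow> 'a set \<Rightarrow> ereal" where
  "setdist x D = (if D = {} then \<infinity> else ereal (infdist x D))"

text \<open>Global error bound modulus (Inf {} = +infinity in ereal).\<close>
definition tau_min :: "'i set \<Rightarrow> ('i \<Rightarrow> 'a::metric_space \<Rightarrow> real) \<Rightarrow> ereal" where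
  "tau_min I G = Inf {ereal \<tau> | \<tau>. \<tau> > 0 \<and>
      (\<forall>x. setdist x (solset I G) \<le> ereal \<tau> * ereal (max (maxf I G x) 0))}"

end

theory Submission
  imports Defs
begin

text \<open>
  Write \<open>f\<close> for the max-function, \<open>S\<close> for its zero sublevel set and
  \<open>slope(x) = min {f'(x,h) | \<parallel>h\<parallel> = 1}\<close>.

  (i) \<open>\<Longrightarrow>\<close> (ii): by a sequence argument the qualification condition becomes a uniform bound
  \<open>slope(y) \<le> -\<tau>\<close> at every \<open>y\<close> with \<open>f y > -\<epsilon>\<^sub>0 \<parallel>y - x\<^sub>b\<parallel>\<close> for some boundary point
  \<open>x\<^sub>b\<close>; outside \<open>S\<close> it follows from the boundary bound at the nearest point of \<open>S\<close>. A
  perturbation \<open>G\<close> as in (ii) agrees with \<open>F\<close> at some \<open>x\<^sub>b\<close>, so \<open>g \<le> f + \<epsilon> \<parallel>\<cdot> - x\<^sub>b\<parallel>\<close>;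
  where \<open>g > 0\<close> the bound above applies, the active indices of \<open>g\<close> are active for \<open>f\<close>, and
  Danskin's formula gives \<open>slope\<^sub>g \<le> -\<tau> + \<epsilon>\<close>. An Ekeland-type argument turns a negative
  slope on \<open>{g > 0}\<close> into a global error bound.

  (ii) \<open>\<Longrightarrow>\<close> (iii): the tilts \<open>F + \<epsilon>/2 \<langle>u, \<cdot> - x\<^sub>b\<rangle>\<close> satisfy all hypotheses of (ii).

  (iii) \<open>\<Longrightarrow>\<close> (i): if \<open>\<bar>slope(z)\<bar>\<close> were small at a point \<open>z\<close> on or near the boundary, a
  subgradient \<open>w\<close> of small norm at \<open>z\<close> yields a tilt of \<open>f\<close> whose solution set lies in a
  half-space far from a point where the tilted function is small, contradicting the error
  bound of (iii).
\<close>

section \<open>Directional derivatives of convex functions\<close>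

definition diff_quot :: "('a::real_normed_vector \<Rightarrow> real) \<Rightarrow> 'a \<Rightarrow> 'a \<Rightarrow> real \<Rightarrow> real" where
  "diff_quot \<phi> x h t = (\<phi> (x + t *\<^sub>R h) - \<phi> x) / t"

lemma diff_quot_mono:
  assumes cv: "convex_on UNIV \<phi>" and st: "0 < s" "s \<le> t"
  shows "diff_quot \<phi> x h s \<le> diff_quot \<phi> x h t"
proof -
  have "x + s *\<^sub>R h = (1 - s/t) *\<^sub>R x + (s/t) *\<^sub>R (x + t *\<^sub>R h)"
    using st by (simp add: scaleR_add_right scaleR_diff_left)
  also have "\<phi> \<dots> \<le> (1 - s/t) * \<phi> x + (s/t) * \<phi> (x + t *\<^sub>R h)"
    by (rule convex_onD[OF cv]) (use st in auto)
  finally have "\<phi> (x + s *\<^sub>R h) - \<phi> x \<le> (s/t) * (\<phi> (x + t *\<^sub>R h) - \<phi> x)"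
    by (simp add: algebra_simps)
  then show ?thesis
    using st unfolding diff_quot_def by (simp add: divide_simps) (simp add: algebra_simps)
qed

lemma diff_quot_ge_backward_diff:
  assumes cv: "convex_on UNIV \<phi>" and t: "0 < t"
  shows "\<phi> x - \<phi> (x - h) \<le> diff_quot \<phi> x h t"
proof -
  define a where "a = 1 / (1 + t)"
  have a: "0 \<le> a" "a \<le> 1" "1 - a = t * a" "a * (1 + t) = 1"
    using t by (auto simp: a_def field_simps)
  have "x = (1 - a) *\<^sub>R (x - h) + a *\<^sub>R (x + t *\<^sub>R h)"
    using a(4) unfolding a(3) by (simp add: algebra_simps flip: scaleR_add_left)
  also have "\<phi> \<dots> \<le> (1 - a) * \<phi> (x - h) + a * \<phi> (x + t *\<^sub>R h)"
    by (rule convex_onD[OF cv]) (use a in auto)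
  finally have "\<phi> x \<le> (t * \<phi> (x - h) + \<phi> (x + t *\<^sub>R h)) / (1 + t)"
    unfolding a(3) by (simp add: a_def add_divide_distrib)
  then have "t * (\<phi> x - \<phi> (x - h)) \<le> \<phi> (x + t *\<^sub>R h) - \<phi> x"
    using t by (simp add: pos_le_divide_eq algebra_simps)
  then show ?thesis
    using t unfolding diff_quot_def by (simp add: pos_le_divide_eq mult.commute)
qed

text \<open>For convex \<open>\<phi>\<close> the difference quotient decreases as \<open>t \<down> 0\<close> and is bounded below,
  so the limit defining \<^const>\<open>dirder\<close> exists and is the infimum.\<close>

lemma diff_quot_tendsto_Inf:
  assumes cv: "convex_on UNIV \<phi>"
  shows "(diff_quot \<phi> x h \<longlongrightarrow> Inf (diff_quot \<phi> x h ` {0<..})) (at_right 0)"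
proof (rule tendstoI)
  fix e :: real assume e: "e > 0"
  let ?D = "Inf (diff_quot \<phi> x h ` {0<..})"
  have bdd: "bdd_below (diff_quot \<phi> x h ` {0<..})"
    by (rule bdd_belowI2[where m="\<phi> x - \<phi> (x - h)"]) (auto intro: diff_quot_ge_backward_diff[OF cv])
  obtain t0 where t0: "t0 > 0" "diff_quot \<phi> x h t0 < ?D + e"
    using cInf_lessD[of "diff_quot \<phi> x h ` {0<..}" "?D + e"] e by force
  show "\<forall>\<^sub>F t in at_right 0. dist (diff_quot \<phi> x h t) ?D < e"
    unfolding eventually_at_right_field
  proof (intro exI[of _ t0] conjI allI impI)
    fix t :: real assume "0 < t" "t < t0"
    then have "?D \<le> diff_quot \<phi> x h t" "diff_quot \<phi> x h t \<le> diff_quot \<phi> x h t0"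
      using bdd diff_quot_mono[OF cv] by (auto intro: cInf_lower)
    then show "dist (diff_quot \<phi> x h t) ?D < e"
      using t0 by (simp add: dist_real_def)
  qed (use t0 in auto)
qed

lemma dirder_eq_Inf:
  assumes cv: "convex_on UNIV \<phi>"
  shows "dirder \<phi> x h = Inf (diff_quot \<phi> x h ` {0<..})"
  unfolding dirder_def using tendsto_Lim[OF _ diff_quot_tendsto_Inf[OF cv]]
  by (simp add: diff_quot_def[abs_def])

lemma dirder_tendsto:
  assumes "convex_on UNIV \<phi>"
  shows "(diff_quot \<phi> x h \<longlongrightarrow> dirder \<phi> x h) (at_right 0)"
  using diff_quot_tendsto_Inf[OF assms] dirder_eq_Inf[OF assms] by simp

lemma dirder_le_diff_quot:
  assumes cv: "convex_on UNIV \<phi>" and t: "t > 0"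
  shows "dirder \<phi> x h \<le> diff_quot \<phi> x h t"
  unfolding dirder_eq_Inf[OF cv] using t
  by (intro cInf_lower bdd_belowI2[where m="\<phi> x - \<phi> (x - h)"])
     (auto intro: diff_quot_ge_backward_diff[OF cv])

lemma dirder_greatest:
  assumes cv: "convex_on UNIV \<phi>" and "\<And>t. t > 0 \<Longrightarrow> a \<le> diff_quot \<phi> x h t"
  shows "a \<le> dirder \<phi> x h"
  unfolding dirder_eq_Inf[OF cv] using assms by (auto intro!: cInf_greatest)

lemma convex_on_dirder_le:
  assumes cv: "convex_on UNIV \<phi>" and t: "t \<ge> 0"
  shows "\<phi> x + t * dirder \<phi> x h \<le> \<phi> (x + t *\<^sub>R h)"
proof (cases "t = 0")
  case False
  with t dirder_le_diff_quot[OF cv, of t x h] show ?thesis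
    by (simp add: diff_quot_def divide_simps algebra_simps)
qed simp

lemma dirder_ge_backward_diff:
  assumes "convex_on UNIV \<phi>"
  shows "\<phi> x - \<phi> (x - h) \<le> dirder \<phi> x h"
  using assms by (intro dirder_greatest diff_quot_ge_backward_diff)

lemma dirder_less_obtains_diff_quot:
  assumes cv: "convex_on UNIV \<phi>" and "dirder \<phi> x h < a" and "b > 0"
  obtains t where "0 < t" "t < b" "diff_quot \<phi> x h t < a"
proof -
  obtain c where c: "c > 0" "\<And>t. 0 < t \<Longrightarrow> t < c \<Longrightarrow> diff_quot \<phi> x h t < a"
    using order_tendstoD(2)[OF dirder_tendsto[OF cv] assms(2)]
    unfolding eventually_at_right_field by auto
  show thesis
    by (rule that[of "min c b / 2"]) (use c \<open>b > 0\<close> in auto)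
qed

lemma dirder_zero: "convex_on UNIV \<phi> \<Longrightarrow> dirder \<phi> x 0 = 0"
  unfolding dirder_eq_Inf by (simp add: diff_quot_def)

lemma dirder_scaleR:
  assumes cv: "convex_on UNIV \<phi>" and c: "c > 0"
  shows "dirder \<phi> x (c *\<^sub>R h) = c * dirder \<phi> x h"
proof -
  have scale: "diff_quot \<phi> x (c *\<^sub>R h) t = c * diff_quot \<phi> x h (c * t)" if "t > 0" for t
    using that c by (simp add: diff_quot_def field_simps)
  have "dirder \<phi> x (c *\<^sub>R h) / c \<le> dirder \<phi> x h"
  proof (rule dirder_greatest[OF cv])
    fix s :: real assume "s > 0"
    then show "dirder \<phi> x (c *\<^sub>R h) / c \<le> diff_quot \<phi> x h s"
      using dirder_le_diff_quot[OF cv, of "s/c" x "c *\<^sub>R h"] scale[of "s/c"] c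
      by (simp add: divide_simps mult.commute)
  qed
  moreover have "c * dirder \<phi> x h \<le> dirder \<phi> x (c *\<^sub>R h)"
    using scale dirder_le_diff_quot[OF cv, of "c * _" x h] c
    by (intro dirder_greatest[OF cv]) simp
  ultimately show ?thesis
    using c by (simp add: divide_simps mult.commute)
qed

lemma dirder_add_le:
  assumes cv: "convex_on UNIV \<phi>"
  shows "dirder \<phi> x (a + b) \<le> dirder \<phi> x a + dirder \<phi> x b"
proof (rule field_le_epsilon)
  fix e :: real assume e: "e > 0"
  obtain t1 where t1: "t1 > 0" "diff_quot \<phi> x a t1 < dirder \<phi> x a + e/2"
    using dirder_less_obtains_diff_quot[OF cv, of x a "dirder \<phi> x a + e/2" 1] e by auto
  obtain t2 where t2: "t2 > 0" "diff_quot \<phi> x b t2 < dirder \<phi> x b + e/2"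
    using dirder_less_obtains_diff_quot[OF cv, of x b "dirder \<phi> x b + e/2" 1] e by auto
  define t where "t = min t1 t2 / 2"
  have t: "t > 0" "2*t \<le> t1" "2*t \<le> t2"
    using t1 t2 by (auto simp: t_def)
  have "x + t *\<^sub>R (a + b) = (1 - 1/2) *\<^sub>R (x + (2*t) *\<^sub>R a) + (1/2) *\<^sub>R (x + (2*t) *\<^sub>R b)"
    by (simp add: algebra_simps flip: scaleR_add_left)
  then have "\<phi> (x + t *\<^sub>R (a + b)) \<le> (1/2) * \<phi> (x + (2*t) *\<^sub>R a) + (1/2) * \<phi> (x + (2*t) *\<^sub>R b)"
    using convex_onD[OF cv, of "1/2" "x + (2*t) *\<^sub>R a" "x + (2*t) *\<^sub>R b"] by simp
  then have "diff_quot \<phi> x (a + b) t \<le> diff_quot \<phi> x a (2*t) + diff_quot \<phi> x b (2*t)"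
    using t unfolding diff_quot_def by (simp add: divide_simps)
  moreover have "diff_quot \<phi> x a (2*t) \<le> diff_quot \<phi> x a t1" "diff_quot \<phi> x b (2*t) \<le> diff_quot \<phi> x b t2"
    using diff_quot_mono[OF cv] t by auto
  ultimately show "dirder \<phi> x (a + b) \<le> dirder \<phi> x a + dirder \<phi> x b + e"
    using dirder_le_diff_quot[OF cv t(1), of x "a + b"] t1 t2 by linarith
qed

lemma dirder_add_uminus_nonneg: "convex_on UNIV \<phi> \<Longrightarrow> 0 \<le> dirder \<phi> x h + dirder \<phi> x (- h)"
  using dirder_add_le[of \<phi> x h "-h"] dirder_zero[of \<phi> x] by simp

lemma dirder_le_lipschitz_perturbation:
  assumes cv1: "convex_on UNIV \<phi>" and cv2: "convex_on UNIV \<psi>"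
    and L: "\<And>a b. \<bar>(\<psi> a - \<phi> a) - (\<psi> b - \<phi> b)\<bar> \<le> L * norm (a - b)"
  shows "dirder \<psi> x h \<le> dirder \<phi> x h + L * norm h"
proof -
  have "dirder \<psi> x h - L * norm h \<le> dirder \<phi> x h"
  proof (rule dirder_greatest[OF cv1])
    fix t :: real assume t: "t > 0"
    have "\<bar>(\<psi> (x + t *\<^sub>R h) - \<phi> (x + t *\<^sub>R h)) - (\<psi> x - \<phi> x)\<bar> \<le> L * (t * norm h)"
      using L[of "x + t *\<^sub>R h" x] t by simp
    then have "diff_quot \<psi> x h t \<le> diff_quot \<phi> x h t + L * norm h"
      using t unfolding diff_quot_def by (simp add: divide_simps abs_le_iff) (simp add: algebra_simps)
    then show "dirder \<psi> x h - L * norm h \<le> diff_quot \<phi> x h t"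
      using dirder_le_diff_quot[OF cv2 t, of x h] by linarith
  qed
  then show ?thesis by linarith
qed

lemma dirder_le_of_touching_above:
  assumes cv1: "convex_on UNIV \<phi>" and cv2: "convex_on UNIV \<psi>"
    and le: "\<And>y. \<phi> y \<le> \<psi> y" and eq: "\<phi> x = \<psi> x"
  shows "dirder \<phi> x h \<le> dirder \<psi> x h"
proof (rule dirder_greatest[OF cv2])
  fix t :: real assume t: "t > 0"
  have "diff_quot \<phi> x h t \<le> diff_quot \<psi> x h t"
    unfolding diff_quot_def using le[of "x + t *\<^sub>R h"] eq t by (simp add: divide_right_mono)
  then show "dirder \<phi> x h \<le> diff_quot \<psi> x h t"
    using dirder_le_diff_quot[OF cv1 t, of x h] by linarith
qed

section \<open>Steepest slopes and small subgradients\<close>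

lemma bdd_below_dirder_sphere:
  fixes \<phi> :: "'a::euclidean_space \<Rightarrow> real"
  assumes cv: "convex_on UNIV \<phi>"
  shows "bdd_below ((\<lambda>h. dirder \<phi> x h) ` sphere 0 1)"
proof -
  have "continuous_on (cball x 1) \<phi>"
    using convex_on_continuous[OF open_UNIV cv] continuous_on_subset by blast
  then obtain m where m: "\<And>y. y \<in> cball x 1 \<Longrightarrow> \<phi> y \<le> \<phi> m"
    using continuous_attains_sup[of "cball x 1" \<phi>] by (metis compact_cball cball_eq_empty not_one_less_zero)
  show ?thesis
  proof (rule bdd_belowI2[where m="\<phi> x - \<phi> m"])
    fix h :: 'a assume "h \<in> sphere 0 1"
    then have "\<phi> (x - h) \<le> \<phi> m" using m by (simp add: dist_norm)
    then show "\<phi> x - \<phi> m \<le> dirder \<phi> x h"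
      using dirder_ge_backward_diff[OF cv, of x h] by linarith
  qed
qed

lemma mindir_le_dirder:
  fixes \<phi> :: "'a::euclidean_space \<Rightarrow> real"
  assumes cv: "convex_on UNIV \<phi>" and h: "norm h = 1"
  shows "mindir \<phi> x \<le> dirder \<phi> x h"
  unfolding mindir_def by (rule cINF_lower[OF bdd_below_dirder_sphere[OF cv]]) (use h in simp)

lemma mindir_less_obtains_dirder:
  fixes \<phi> :: "'a::euclidean_space \<Rightarrow> real"
  assumes "mindir \<phi> x < a"
  obtains h where "norm h = 1" "dirder \<phi> x h < a"
  using cInf_lessD[of "(\<lambda>h. dirder \<phi> x h) ` sphere 0 1" a] assms
  unfolding mindir_def by (auto simp: sphere_eq_empty)

lemma mindir_mult_norm_le_dirder:
  fixes \<phi> :: "'a::euclidean_space \<Rightarrow> real"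
  assumes cv: "convex_on UNIV \<phi>"
  shows "mindir \<phi> x * norm h \<le> dirder \<phi> x h"
proof (cases "h = 0")
  case True
  then show ?thesis by (simp add: dirder_zero[OF cv])
next
  case False
  have "mindir \<phi> x * norm h \<le> dirder \<phi> x (h /\<^sub>R norm h) * norm h"
    using mindir_le_dirder[OF cv, of "h /\<^sub>R norm h"] False by (simp add: mult_right_mono)
  also have "\<dots> = dirder \<phi> x h"
    using dirder_scaleR[OF cv, of "norm h" x "h /\<^sub>R norm h"] False by simp
  finally show ?thesis .
qed

lemma convex_on_mindir_le:
  fixes \<phi> :: "'a::euclidean_space \<Rightarrow> real"
  assumes cv: "convex_on UNIV \<phi>"
  shows "\<phi> x + mindir \<phi> x * norm (y - x) \<le> \<phi> y"
  using convex_on_dirder_le[OF cv, of 1 x "y - x"] mindir_mult_norm_le_dirder[OF cv, of x "y - x"]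
  by simp

lemma mindir_le_zero_of_eq:
  fixes \<phi> :: "'a::euclidean_space \<Rightarrow> real"
  assumes cv: "convex_on UNIV \<phi>" and "\<phi> x = \<phi> y" "x \<noteq> y"
  shows "mindir \<phi> x \<le> 0"
  using convex_on_mindir_le[OF cv, of x y] assms(2,3) by (simp add: mult_le_0_iff)

lemma convex_strict_hypograph_neg_norm:
  fixes s :: real
  assumes s: "s \<ge> 0"
  shows "convex {p :: 'a::real_normed_vector \<times> real. snd p < - s * norm (fst p)}"
  unfolding convex_def
proof (clarsimp)
  fix h1 h2 :: 'a and r1 r2 u v :: real
  assume h: "r1 < - (s * norm h1)" "r2 < - (s * norm h2)" and uv: "0 \<le> u" "0 \<le> v" "u + v = 1"
  have "u * r1 + v * r2 < - s * (u * norm h1 + v * norm h2)"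
  proof (cases "u = 0")
    case False
    then have "u * r1 < u * (- s * norm h1)" using h uv by (intro mult_strict_left_mono) auto
    moreover have "v * r2 \<le> v * (- s * norm h2)" using h uv by (intro mult_left_mono) auto
    ultimately show ?thesis by (simp add: algebra_simps)
  qed (use h uv in simp)
  also have "\<dots> \<le> - s * norm (u *\<^sub>R h1 + v *\<^sub>R h2)"
    using norm_triangle_ineq[of "u *\<^sub>R h1" "v *\<^sub>R h2"] uv s by (simp add: mult_left_mono)
  finally show "u * r1 + v * r2 < - (s * norm (u *\<^sub>R h1 + v *\<^sub>R h2))" by simp
qed

text \<open>A hyperplane separating the epigraph of \<open>\<phi> - \<phi> x\<close> (moved to the origin) from the strict
  hypograph of \<open>-s \<parallel>\<cdot>\<parallel>\<close> cannot be vertical; its slope is a subgradient of norm at most \<open>s\<close>.\<close>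

lemma separating_hyperplane_imp_subgradient:
  fixes \<phi> :: "'a::real_inner \<Rightarrow> real"
  assumes s: "s \<ge> 0" and a: "(a, \<alpha>) \<noteq> 0"
    and E: "\<And>h r. \<phi> (x + h) - \<phi> x \<le> r \<Longrightarrow> a \<bullet> h + \<alpha> * r \<le> b"
    and T: "\<And>h r. r < - s * norm h \<Longrightarrow> b \<le> a \<bullet> h + \<alpha> * r"
  obtains w where "norm w \<le> s" "\<And>y. \<phi> x + w \<bullet> (y - x) \<le> \<phi> y"
proof -
  have "b \<le> 0"
  proof (rule ccontr)
    assume "\<not> b \<le> 0"
    moreover have "b \<le> - \<alpha>"
      using T[of "-1" 0] by simp
    ultimately show False
      using T[of "- b / (- 2 * \<alpha>)" 0] by (simp add: field_simps)
  qed
  then have b: "b = 0"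
    using E[of 0 0] by simp
  have "\<alpha> \<noteq> 0"
  proof
    assume "\<alpha> = 0"
    then have "a \<bullet> a \<le> 0"
      using E[of a "\<phi> (x + a) - \<phi> x"] b by simp
    with \<open>\<alpha> = 0\<close> a show False
      by (auto simp: zero_prod_def dest: inner_gt_zero_iff[THEN iffD2])
  qed
  with T[of "-1" 0] b have \<alpha>: "\<alpha> < 0"
    by simp
  define w where "w = (1 / - \<alpha>) *\<^sub>R a"
  have w_le: "w \<bullet> h \<le> \<phi> (x + h) - \<phi> x" for h
    using E[of h "\<phi> (x + h) - \<phi> x"] b \<alpha> by (simp add: w_def divide_simps algebra_simps)
  have w_ge: "- s * norm h \<le> w \<bullet> h" for h
  proof (rule ccontr)
    assume "\<not> ?thesis"
    then have "(w \<bullet> h + - s * norm h) / 2 < - s * norm h" "w \<bullet> h < (w \<bullet> h + - s * norm h) / 2"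
      by auto
    with T[of "(w \<bullet> h + - s * norm h) / 2" h] b \<alpha> show False
      by (simp add: w_def divide_simps algebra_simps)
  qed
  show ?thesis
  proof
    have "norm w * norm w \<le> s * norm w"
      using w_ge[of "- w"] by (simp add: dot_square_norm power2_eq_square)
    then show "norm w \<le> s"
      using s by (cases "w = 0") (auto simp: mult_le_cancel_right_pos)
    show "\<phi> x + w \<bullet> (y - x) \<le> \<phi> y" for y
      using w_le[of "y - x"] by simp
  qed
qed

lemma convex_on_subgradient_norm_le:
  fixes \<phi> :: "'a::euclidean_space \<Rightarrow> real"
  assumes cv: "convex_on UNIV \<phi>" and s: "s \<ge> 0"
    and low: "\<And>y. \<phi> x - s * norm (y - x) \<le> \<phi> y"
  obtains w where "norm w \<le> s" "\<And>y. \<phi> x + w \<bullet> (y - x) \<le> \<phi> y"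
proof -
  define T :: "('a \<times> real) set" where "T = {p. snd p < - s * norm (fst p)}"
  define E where "E = (+) (- x, - \<phi> x) ` epigraph UNIV \<phi>"
  have E: "(h, r) \<in> E \<longleftrightarrow> \<phi> (x + h) - \<phi> x \<le> r" for h r
    unfolding E_def image_iff
    by (auto simp: mem_epigraph algebra_simps intro!: bexI[of _ "(x + h, r + \<phi> x)"])
  have "convex E"
    unfolding E_def by (intro convex_translation convex_epigraphI cv)
  moreover have "convex T"
    unfolding T_def by (rule convex_strict_hypograph_neg_norm[OF s])
  moreover have "E \<inter> T = {}"
  proof -
    have "(h, r) \<notin> T" if "(h, r) \<in> E" for h r
      using that low[of "x + h"] by (simp add: E T_def)
    then show ?thesis by auto
  qed
  moreover have "(0, 0) \<in> E" "(0, -1) \<in> T"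
    by (simp_all add: E T_def)
  ultimately obtain n b where "n \<noteq> 0" "\<forall>p\<in>E. n \<bullet> p \<le> b" "\<forall>p\<in>T. b \<le> n \<bullet> p"
    using separating_hyperplane_sets[of E T] by blast
  moreover obtain a \<alpha> where "n = (a, \<alpha>)"
    by (cases n)
  ultimately have "(a, \<alpha>) \<noteq> 0"
    and "\<phi> (x + h) - \<phi> x \<le> r \<Longrightarrow> a \<bullet> h + \<alpha> * r \<le> b"
    and "r < - s * norm h \<Longrightarrow> b \<le> a \<bullet> h + \<alpha> * r" for h r
    using E[of h r] by (auto simp: T_def inner_Pair)
  then show thesis
    using that by (rule separating_hyperplane_imp_subgradient[OF s])
qed

lemma convex_on_subgradient_norm_le_mindir:
  fixes \<phi> :: "'a::euclidean_space \<Rightarrow> real"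
  assumes cv: "convex_on UNIV \<phi>"
  obtains w where "norm w \<le> \<bar>mindir \<phi> x\<bar>" "\<And>y. \<phi> x + w \<bullet> (y - x) \<le> \<phi> y"
proof (rule convex_on_subgradient_norm_le[OF cv])
  show "\<phi> x - \<bar>mindir \<phi> x\<bar> * norm (y - x) \<le> \<phi> y" for y
  proof -
    have "- \<bar>mindir \<phi> x\<bar> * norm (y - x) \<le> mindir \<phi> x * norm (y - x)"
      by (intro mult_right_mono) auto
    then show ?thesis
      using convex_on_mindir_le[OF cv, of x y] by linarith
  qed
qed auto

section \<open>Error bounds from slopes\<close>

lemma frontier_sublevel_eq_zero:
  fixes f :: "'a::topological_space \<Rightarrow> real"
  assumes cont: "continuous_on UNIV f" and x: "x \<in> frontier {x. f x \<le> 0}"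
  shows "f x = 0"
proof -
  have "f x \<le> 0"
    using x closed_Collect_le[OF cont continuous_on_const] by (auto simp: frontier_def)
  moreover have "\<not> f x < 0"
  proof
    assume "f x < 0"
    moreover have "open {x. f x < 0}"
      using open_Collect_less[OF cont continuous_on_const] by simp
    ultimately have "x \<in> interior {x. f x \<le> 0}"
      by (force intro: interiorI)
    with x show False
      by (simp add: frontier_def)
  qed
  ultimately show ?thesis by simp
qed

lemma nearest_point_inner_le:
  fixes y p k :: "'a::real_inner"
  assumes near: "\<And>q. q \<in> S \<Longrightarrow> norm (y - p) \<le> norm (y - q)"
    and into: "\<And>b. b > 0 \<Longrightarrow> \<exists>t. 0 < t \<and> t < b \<and> p + t *\<^sub>R k \<in> S"
  shows "(y - p) \<bullet> k \<le> 0"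
proof (rule ccontr)
  define d where "d = y - p"
  assume "\<not> (y - p) \<bullet> k \<le> 0"
  then have dk: "d \<bullet> k > 0" by (simp add: d_def)
  have nk: "(norm k)\<^sup>2 + 1 > 0"
    by (simp add: add_nonneg_pos)
  then obtain t where t: "0 < t" "t < 2 * (d \<bullet> k) / ((norm k)\<^sup>2 + 1)" "p + t *\<^sub>R k \<in> S"
    using into[of "2 * (d \<bullet> k) / ((norm k)\<^sup>2 + 1)"] dk by auto
  have "(norm d)\<^sup>2 \<le> (norm (d - t *\<^sub>R k))\<^sup>2"
    using near[OF t(3)] by (simp add: d_def algebra_simps)
  also have "\<dots> = d \<bullet> d - 2 * t * (d \<bullet> k) + t\<^sup>2 * (k \<bullet> k)"
    unfolding power2_norm_eq_inner
    by (simp add: inner_diff_left inner_diff_right inner_commute algebra_simps power2_eq_square)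
  also have "\<dots> = (norm d)\<^sup>2 - 2 * t * (d \<bullet> k) + t\<^sup>2 * (norm k)\<^sup>2"
    by (simp add: dot_square_norm)
  finally have "2 * (d \<bullet> k) \<le> t * (norm k)\<^sup>2"
    using t(1) by (simp add: power2_eq_square algebra_simps)
  also have "\<dots> < 2 * (d \<bullet> k)"
    using t(1,2) nk by (simp add: pos_less_divide_eq) (smt (verit) mult_left_mono norm_ge_zero)
  finally show False by simp
qed

lemma nearest_point_in_frontier:
  fixes S :: "'a::real_normed_vector set"
  assumes "closed S" "p \<in> S" "y \<notin> S" and near: "\<And>q. q \<in> S \<Longrightarrow> dist y p \<le> dist y q"
  shows "p \<in> frontier S"
proof -
  have "p \<notin> interior S"
  proof
    assume "p \<in> interior S"
    then obtain e where e: "e > 0" "ball p e \<subseteq> S"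
      by (auto simp: mem_interior)
    define r where "r = dist y p"
    have r: "r > 0" using assms(2,3) by (auto simp: r_def)
    define q where "q = p + (min e r / 2 / r) *\<^sub>R (y - p)"
    have "dist p q < e"
      using e r by (simp add: q_def dist_norm r_def)
    then have "q \<in> S" using e by auto
    have c: "0 < min e r / 2 / r" "min e r / 2 / r \<le> 1"
      using e r by auto
    have "y - q = (1 - min e r / 2 / r) *\<^sub>R (y - p)"
      by (simp add: q_def algebra_simps)
    then have "dist y q = (1 - min e r / 2 / r) * r"
      using c by (simp add: dist_norm r_def)
    also have "\<dots> = r - min e r / 2"
      using r by (simp add: field_simps)
    finally have "dist y q = r - min e r / 2" .
    moreover have "r \<le> dist y q"
      using near[OF \<open>q \<in> S\<close>] by (simp add: r_def)
    ultimately show False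
      using e r by simp
  qed
  then show ?thesis
    using assms(1,2) by (simp add: frontier_def)
qed

text \<open>At a boundary point with \<open>\<bar>min\<^sub>h f'(p,h)\<bar> > \<tau>\<close>, a direction \<open>d\<close> making an obtuse
  angle with every descent direction has slope at least \<open>\<tau>\<close>: otherwise a unit descent
  direction \<open>h\<close> with \<open>f'(p,h) < -\<tau>\<close> would give the descent direction \<open>d + h\<close>, and
  \<open>\<parallel>d + h\<parallel>\<^sup>2 = 2 d \<bullet> (d + h) \<le> 0\<close> forces \<open>h = -d\<close>, contradicting subadditivity.\<close>

lemma dirder_normal_ge:
  fixes f :: "'a::euclidean_space \<Rightarrow> real"
  assumes cv: "convex_on UNIV f" and d: "norm d = 1" and p: "\<tau> < \<bar>mindir f p\<bar>"
    and normal: "\<And>k. dirder f p k < 0 \<Longrightarrow> d \<bullet> k \<le> 0"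
  shows "\<tau> \<le> dirder f p d"
proof (cases "mindir f p > 0")
  case True
  then show ?thesis
    using p mindir_le_dirder[OF cv d, of p] by simp
next
  case False
  then obtain h where h: "norm h = 1" "dirder f p h < - \<tau>"
    using p mindir_less_obtains_dirder[of f p "- \<tau>"] by force
  show ?thesis
  proof (rule ccontr)
    assume small: "\<not> \<tau> \<le> dirder f p d"
    then have "dirder f p (d + h) < 0"
      using dirder_add_le[OF cv, of p d h] h by simp
    then have "d \<bullet> (d + h) \<le> 0"
      by (rule normal)
    moreover have "(norm (d + h))\<^sup>2 = d \<bullet> d + 2 * (d \<bullet> h) + h \<bullet> h"
      unfolding power2_norm_eq_inner by (simp add: inner_add_left inner_add_right inner_commute)
    moreover have "d \<bullet> d = 1" "h \<bullet> h = 1"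
      using d h(1) by (simp_all add: dot_square_norm)
    ultimately have "(norm (d + h))\<^sup>2 \<le> 0"
      by (simp add: inner_add_right)
    then have "d + h = 0"
      by simp
    then have "h = - d"
      by (simp add: add_eq_0_iff)
    then show False
      using dirder_add_uminus_nonneg[OF cv, of p d] h small by simp
  qed
qed

lemma nearest_point_descent_inner_le:
  fixes f :: "'a::euclidean_space \<Rightarrow> real"
  assumes cv: "convex_on UNIV f" and p: "f p \<le> 0"
    and near: "\<And>q. f q \<le> 0 \<Longrightarrow> dist y p \<le> dist y q" and k: "dirder f p k < 0"
  shows "(y - p) \<bullet> k \<le> 0"
proof (rule nearest_point_inner_le)
  show "norm (y - p) \<le> norm (y - q)" if "q \<in> {x. f x \<le> 0}" for q
    using near that by (simp add: dist_norm)
  fix b :: real assume "b > 0"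
  then obtain t where t: "0 < t" "t < b" "diff_quot f p k t < 0"
    using dirder_less_obtains_diff_quot[OF cv k] by blast
  then have "f (p + t *\<^sub>R k) < f p"
    by (simp add: diff_quot_def divide_less_0_iff)
  then show "\<exists>t. 0 < t \<and> t < b \<and> p + t *\<^sub>R k \<in> {x. f x \<le> 0}"
    using t p by auto
qed

lemma convex_slope_outside_sublevel:
  fixes f :: "'a::euclidean_space \<Rightarrow> real"
  assumes cv: "convex_on UNIV f" and ne: "{x. f x \<le> 0} \<noteq> {}"
    and bd: "\<And>p. p \<in> frontier {x. f x \<le> 0} \<Longrightarrow> \<tau> < \<bar>mindir f p\<bar>"
    and fy: "f y > 0"
  shows "mindir f y \<le> - \<tau>"
proof -
  define S where "S = {x. f x \<le> 0}"
  have "closed S"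
    unfolding S_def by (rule closed_Collect_le[OF convex_on_continuous[OF open_UNIV cv]]) simp
  then obtain p where p: "p \<in> S" "infdist y S = dist y p"
    using infdist_attains_inf ne unfolding S_def by blast
  have near: "dist y p \<le> dist y q" if "q \<in> S" for q
    using infdist_le[OF that, of y] p(2) by simp
  have "y \<notin> S" using fy by (simp add: S_def)
  define r where "r = norm (y - p)"
  have r: "r > 0" using p(1) \<open>y \<notin> S\<close> by (auto simp: r_def)
  define d where "d = (1 / r) *\<^sub>R (y - p)"
  have d: "norm d = 1" "y = p + r *\<^sub>R d"
    using r by (simp_all add: d_def r_def)
  have "p \<in> frontier S"
    using nearest_point_in_frontier[OF \<open>closed S\<close> p(1) \<open>y \<notin> S\<close> near] .
  moreover have "d \<bullet> k \<le> 0" if "dirder f p k < 0" for k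
    using nearest_point_descent_inner_le[OF cv _ _ that, of y] p(1) near r
    by (simp add: S_def d_def divide_nonpos_pos)
  ultimately have "\<tau> \<le> dirder f p d"
    using dirder_normal_ge[OF cv d(1) bd] by (simp add: S_def)
  also have "dirder f p d \<le> (f y - f p) / r"
    using dirder_le_diff_quot[OF cv r, of p d] by (simp add: diff_quot_def d(2))
  also have "(f y - f p) / r = - ((f p - f y) / r)"
    by (simp add: minus_divide_left)
  also have "(f p - f y) / r = diff_quot f y (- d) r"
    by (simp add: diff_quot_def d(2))
  finally have "dirder f y (- d) \<le> - \<tau>"
    using dirder_le_diff_quot[OF cv r, of y "- d"] by linarith
  then show ?thesis
    using mindir_le_dirder[OF cv, of "- d" y] d(1) by simp
qed

lemma convex_penalized_descent:
  fixes g :: "'a::euclidean_space \<Rightarrow> real"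
  assumes cv: "convex_on UNIV g" and gx: "g x > 0" and slope: "mindir g x < - \<kappa>"
    and k: "0 < k" "k \<le> \<kappa>" and x: "dist y x < r"
  obtains x' where "dist y x' \<le> r" "max (g x') 0 + k * dist y x' < max (g x) 0 + k * dist y x"
proof -
  have "\<kappa> > 0" using k gx by simp
  obtain h where h: "norm h = 1" "dirder g x h < - \<kappa>"
    using mindir_less_obtains_dirder[OF slope] .
  obtain t where t: "0 < t" "t < min (r - dist y x) (g x / \<kappa>)" "diff_quot g x h t < - \<kappa>"
    using dirder_less_obtains_diff_quot[OF cv h(2), of "min (r - dist y x) (g x / \<kappa>)"]
      x gx \<open>\<kappa> > 0\<close> by auto
  have "g (x + t *\<^sub>R h) < g x - \<kappa> * t"
    using t(1,3) by (simp add: diff_quot_def pos_divide_less_eq algebra_simps)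
  moreover have "\<kappa> * t < g x"
    using t(2) \<open>\<kappa> > 0\<close> by (simp add: pos_less_divide_eq mult.commute)
  ultimately have descent: "max (g (x + t *\<^sub>R h)) 0 < g x - \<kappa> * t"
    by simp
  have dist: "dist y (x + t *\<^sub>R h) \<le> dist y x + t"
    using dist_triangle[of y "x + t *\<^sub>R h" x] h(1) t(1) by (simp add: dist_norm)
  show ?thesis
  proof
    show "dist y (x + t *\<^sub>R h) \<le> r"
      using dist t(2) by simp
    have "k * dist y (x + t *\<^sub>R h) \<le> k * dist y x + k * t"
      using mult_left_mono[OF dist less_imp_le[OF k(1)]] by (simp add: algebra_simps)
    moreover have "k * t \<le> \<kappa> * t"
      using k(2) t(1) by (simp add: mult_right_mono)
    moreover have "max (g x) 0 = g x"
      using gx by simp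
    ultimately show "max (g (x + t *\<^sub>R h)) 0 + k * dist y (x + t *\<^sub>R h) < max (g x) 0 + k * dist y x"
      using descent by linarith
  qed
qed

lemma convex_penalized_minimiser_in_sublevel:
  fixes g :: "'a::euclidean_space \<Rightarrow> real"
  assumes cv: "convex_on UNIV g" and slope: "\<And>x. g x > 0 \<Longrightarrow> mindir g x \<le> - \<kappa>"
    and k: "0 < k" "k < \<kappa>" and x: "dist y x < r"
    and min: "\<And>z. dist y z \<le> r \<Longrightarrow> max (g x) 0 + k * dist y x \<le> max (g z) 0 + k * dist y z"
  shows "g x \<le> 0"
proof (rule ccontr)
  assume "\<not> g x \<le> 0"
  then have "g x > 0" "mindir g x < - k"
    using slope[of x] k by auto
  then obtain z where "dist y z \<le> r" "max (g z) 0 + k * dist y z < max (g x) 0 + k * dist y x"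
    using convex_penalized_descent[OF cv _ _ k(1) order_refl x] by blast
  then show False
    using min[of z] by linarith
qed

text \<open>An Ekeland-type argument: if \<open>y\<close> were far from \<open>S = {g \<le> 0}\<close>, a minimiser of the
  penalised function \<open>max (g x) 0 + \<kappa>/2 \<parallel>x - y\<parallel>\<close> over the ball of radius \<open>d(y, S)\<close>
  would lie in the open ball, hence in \<open>S\<close>, which is too far away.\<close>

lemma convex_error_bound:
  fixes g :: "'a::euclidean_space \<Rightarrow> real"
  assumes cv: "convex_on UNIV g" and \<kappa>: "\<kappa> > 0"
    and slope: "\<And>x. g x > 0 \<Longrightarrow> mindir g x \<le> - \<kappa>"
  shows "infdist y {x. g x \<le> 0} \<le> 2 / \<kappa> * max (g y) 0"
proof (cases "g y \<le> 0")
  case True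
  then show ?thesis by simp
next
  case False
  define r where "r = infdist y {x. g x \<le> 0}"
  define k where "k = \<kappa> / 2"
  define \<psi> where "\<psi> x = max (g x) 0 + k * dist y x" for x
  have k: "0 < k" "k < \<kappa>"
    using \<kappa> by (simp_all add: k_def)
  show ?thesis
  proof (rule ccontr)
    assume "\<not> ?thesis"
    then have far: "g y < k * r"
      using False \<kappa> by (simp add: r_def k_def field_simps)
    have "continuous_on (cball y r) \<psi>"
      unfolding \<psi>_def using convex_on_continuous[OF open_UNIV cv]
      by (intro continuous_intros) (auto intro: continuous_on_subset)
    moreover have "r \<ge> 0"
      by (simp add: r_def infdist_nonneg)
    ultimately obtain x where x: "x \<in> cball y r" "\<And>z. z \<in> cball y r \<Longrightarrow> \<psi> x \<le> \<psi> z"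
      using continuous_attains_inf[OF compact_cball] by (metis cball_eq_empty not_less)
    have "\<psi> x < k * r"
      using x(2)[of y] far False \<open>r \<ge> 0\<close> by (simp add: \<psi>_def)
    then have "k * dist y x < k * r"
      by (simp add: \<psi>_def)
    then have "dist y x < r"
      using k by simp
    moreover have "max (g x) 0 + k * dist y x \<le> max (g z) 0 + k * dist y z" if "dist y z \<le> r" for z
      using x(2)[of z] that by (simp add: \<psi>_def)
    ultimately have "g x \<le> 0"
      using convex_penalized_minimiser_in_sublevel[OF cv slope k, of y x r] by blast
    then have "k * r \<le> k * dist y x"
      using infdist_le[of x "{x. g x \<le> 0}" y] k by (simp add: r_def)
    with \<open>\<psi> x < k * r\<close> show False
      by (simp add: \<psi>_def)
  qed
qed

lemma infdist_greatest:
  assumes "A \<noteq> {}" "\<And>a. a \<in> A \<Longrightarrow> d \<le> dist x a"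
  shows "d \<le> infdist x A"
  unfolding infdist_notempty[OF assms(1)] by (rule cINF_greatest) (use assms in auto)

lemma tau_min_leI:
  assumes c: "c > 0" and ne: "solset I H \<noteq> {}"
    and bound: "\<And>x. infdist x (solset I H) \<le> c * max (maxf I H x) 0"
  shows "tau_min I H \<le> ereal c"
  unfolding tau_min_def
proof (rule Inf_lower, intro CollectI exI conjI allI)
  show "setdist x (solset I H) \<le> ereal c * ereal (max (maxf I H x) 0)" for x
    using bound[of x] ne by (simp add: setdist_def del: ereal_max)
qed (use c in auto)

lemma tau_min_le_imp_infdist_le:
  assumes tau: "tau_min I H \<le> ereal c" and y: "maxf I H y > 0"
  shows "solset I H \<noteq> {} \<and> infdist y (solset I H) \<le> c * maxf I H y"
proof -
  have approx: "solset I H \<noteq> {} \<and> infdist y (solset I H) \<le> (c + e) * maxf I H y"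
    if "e > 0" for e
  proof -
    have "tau_min I H < ereal (c + e)"
      using tau that by (simp add: le_less_trans)
    then obtain \<tau> where \<tau>: "\<tau> < c + e"
        "setdist y (solset I H) \<le> ereal \<tau> * ereal (max (maxf I H y) 0)"
      unfolding tau_min_def Inf_less_iff by auto
    then have "solset I H \<noteq> {}" "infdist y (solset I H) \<le> \<tau> * maxf I H y"
      using y by (auto simp: setdist_def split: if_splits)
    moreover have "\<tau> * maxf I H y \<le> (c + e) * maxf I H y"
      using \<tau>(1) y by (intro mult_right_mono) auto
    ultimately show ?thesis
      by simp
  qed
  have "infdist y (solset I H) \<le> c * maxf I H y + e" if "e > 0" for e
  proof -
    have "(c + e / maxf I H y) * maxf I H y = c * maxf I H y + e"
      using y by (simp add: field_simps)
    then show ?thesis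
      using approx[of "e / maxf I H y"] that y by simp
  qed
  then show ?thesis
    using approx[of 1] field_le_epsilon by auto
qed

section \<open>The three conditions\<close>

definition slope_qc :: "('a::euclidean_space \<Rightarrow> real) \<Rightarrow> real \<Rightarrow> bool" where
  "slope_qc f \<tau> \<longleftrightarrow>
    (INF x\<in>frontier {x. f x \<le> 0}. ereal \<bar>mindir f x\<bar>) > ereal \<tau> \<and>
    (\<forall>z :: nat \<Rightarrow> 'a. (\<forall>k. z k \<in> {x. f x \<le> 0} - frontier {x. f x \<le> 0}) \<and>
        (\<exists>x :: nat \<Rightarrow> 'a. (\<forall>k. x k \<in> frontier {x. f x \<le> 0}) \<and>
           ((\<lambda>k. (f (z k) - f (x k)) / norm (z k - x k)) \<longlonglongrightarrow> 0))
      \<longrightarrow> liminf (\<lambda>k. ereal \<bar>mindir f (z k)\<bar>) > ereal \<tau>)"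

definition perturbation_error_bound ::
    "'i::t2_space set \<Rightarrow> ('i \<Rightarrow> 'a::euclidean_space \<Rightarrow> real) \<Rightarrow> real \<Rightarrow> real \<Rightarrow> bool" where
  "perturbation_error_bound I F c \<epsilon> \<longleftrightarrow> (\<forall>G :: 'i \<Rightarrow> 'a \<Rightarrow> real.
    continuous_on (I \<times> UNIV) (\<lambda>(i, x). G i x) \<and>
    (\<forall>i\<in>I. convex_on UNIV (G i)) \<and>
    {z\<in>frontier (solset I F). \<forall>i\<in>I. F i z = G i z} \<noteq> {} \<and>
    (SUP i\<in>I. Lipc (\<lambda>x. F i x - G i x)) < ereal \<epsilon> \<and>
    (\<forall>x. mindir (maxf I F) x < 0 \<longrightarrow> active I G x \<subseteq> active I F x) \<and>
    (\<forall>x. mindir (maxf I F) x > 0 \<longrightarrow> active I F x \<subseteq> active I G x)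
    \<longrightarrow> tau_min I G \<le> ereal c)"

definition tilt_error_bound ::
    "'i::t2_space set \<Rightarrow> ('i \<Rightarrow> 'a::euclidean_space \<Rightarrow> real) \<Rightarrow> real \<Rightarrow> real \<Rightarrow> bool" where
  "tilt_error_bound I F c \<epsilon> \<longleftrightarrow> (\<forall>xb\<in>frontier (solset I F). \<forall>u::'a. norm u \<le> 1 \<longrightarrow>
    tau_min I (\<lambda>i x. F i x + \<epsilon> * (u \<bullet> (x - xb))) \<le> ereal c)"

lemma slope_quotient_tendsto_zero:
  fixes Z X :: "nat \<Rightarrow> 'a::real_normed_vector"
  assumes "\<And>n. Z n \<noteq> X n" "\<And>n. f (X n) = 0" "\<And>n. f (Z n) \<le> 0"
    and near: "\<And>n. - (1 / Suc n) * norm (Z n - X n) \<le> f (Z n)"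
  shows "(\<lambda>n. (f (Z n) - f (X n)) / norm (Z n - X n)) \<longlonglongrightarrow> 0"
proof -
  have "(\<lambda>n. - (1 / real (Suc n))) \<longlonglongrightarrow> 0"
    using tendsto_minus[OF LIMSEQ_inverse_real_of_nat] by (simp add: inverse_eq_divide)
  then show ?thesis
  proof (rule tendsto_sandwich[OF _ _ _ tendsto_const, rotated 2])
    show "\<forall>\<^sub>F n in sequentially. - (1 / Suc n) \<le> (f (Z n) - f (X n)) / norm (Z n - X n)"
      using assms by (simp add: le_divide_eq)
    show "\<forall>\<^sub>F n in sequentially. (f (Z n) - f (X n)) / norm (Z n - X n) \<le> 0"
      using assms by (simp add: divide_le_0_iff)
  qed
qed

lemma slope_qc_interior_uniform:
  fixes f :: "'a::euclidean_space \<Rightarrow> real"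
  defines "S \<equiv> {x. f x \<le> 0}"
  assumes cv: "convex_on UNIV f" and qc: "slope_qc f \<tau>" and \<tau>: "\<tau> > 0"
  obtains \<epsilon>\<^sub>0 where "\<epsilon>\<^sub>0 > 0" "\<And>z xb. z \<in> S - frontier S \<Longrightarrow> xb \<in> frontier S \<Longrightarrow>
    - \<epsilon>\<^sub>0 * norm (z - xb) \<le> f z \<Longrightarrow> mindir f z \<le> - \<tau>"
proof -
  have f0: "f x = 0" if "x \<in> frontier S" for x
    using frontier_sublevel_eq_zero[OF convex_on_continuous[OF open_UNIV cv]] that by (simp add: S_def)
  have "\<exists>\<epsilon>\<^sub>0>0. \<forall>z xb. z \<in> S - frontier S \<longrightarrow> xb \<in> frontier S \<longrightarrow>
      - \<epsilon>\<^sub>0 * norm (z - xb) \<le> f z \<longrightarrow> mindir f z \<le> - \<tau>"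
  proof (rule ccontr)
    assume "\<not> ?thesis"
    then have "\<forall>n. \<exists>z xb. z \<in> S - frontier S \<and> xb \<in> frontier S \<and>
        - (1 / Suc n) * norm (z - xb) \<le> f z \<and> - \<tau> < mindir f z"
      by (metis not_le of_nat_0_less_iff zero_less_Suc divide_pos_pos zero_less_one)
    then obtain Z X where Z: "\<And>n. Z n \<in> S - frontier S" and X: "\<And>n. X n \<in> frontier S"
      and near: "\<And>n. - (1 / Suc n) * norm (Z n - X n) \<le> f (Z n)"
      and flat: "\<And>n. - \<tau> < mindir f (Z n)"
      by metis
    have "Z n \<noteq> X n" for n
      using Z X by (metis DiffD2)
    then have R: "norm (Z n - X n) > 0" for n
      by simp
    have "(\<lambda>n. (f (Z n) - f (X n)) / norm (Z n - X n)) \<longlonglongrightarrow> 0"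
      using \<open>Z _ \<noteq> X _\<close> f0[OF X] near Z by (intro slope_quotient_tendsto_zero) (auto simp: S_def)
    then have "liminf (\<lambda>n. ereal \<bar>mindir f (Z n)\<bar>) > ereal \<tau>"
      using qc Z X unfolding slope_qc_def S_def by blast
    then have "\<forall>\<^sub>F n in sequentially. ereal \<tau> < ereal \<bar>mindir f (Z n)\<bar>"
      by (rule less_LiminfD)
    moreover have "\<forall>\<^sub>F n in sequentially. 1 / Suc n < \<tau>"
      using order_tendstoD(2)[OF LIMSEQ_inverse_real_of_nat \<tau>] by (simp add: inverse_eq_divide)
    ultimately have "\<forall>\<^sub>F n in sequentially. ereal \<tau> < ereal \<bar>mindir f (Z n)\<bar> \<and> 1 / Suc n < \<tau>"
      by (rule eventually_conj)
    then obtain n where n: "\<tau> < \<bar>mindir f (Z n)\<bar>" "1 / Suc n < \<tau>"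
      unfolding eventually_sequentially by force
    then have "\<tau> < mindir f (Z n)"
      using flat[of n] by linarith
    then have "\<tau> * norm (Z n - X n) \<le> mindir f (Z n) * norm (Z n - X n)"
      by (intro mult_right_mono) auto
    moreover have "f (Z n) + mindir f (Z n) * norm (Z n - X n) \<le> 0"
      using convex_on_mindir_le[OF cv, of "Z n" "X n"] f0[OF X] by (simp add: norm_minus_commute)
    ultimately have "f (Z n) \<le> - \<tau> * norm (Z n - X n)"
      by linarith
    moreover have "1 / Suc n * norm (Z n - X n) < \<tau> * norm (Z n - X n)"
      using n(2) R[of n] by (rule mult_strict_right_mono)
    ultimately show False
      using near[of n] by linarith
  qed
  then show thesis
    using that by blast
qed

lemma slope_qc_imp_uniform_slope:
  fixes f :: "'a::euclidean_space \<Rightarrow> real"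
  defines "S \<equiv> {x. f x \<le> 0}"
  assumes cv: "convex_on UNIV f" and qc: "slope_qc f \<tau>" and \<tau>: "\<tau> > 0"
  obtains \<epsilon>\<^sub>0 where "\<epsilon>\<^sub>0 > 0"
    "\<And>xb y. xb \<in> frontier S \<Longrightarrow> - \<epsilon>\<^sub>0 * norm (y - xb) < f y \<Longrightarrow> mindir f y \<le> - \<tau>"
proof -
  obtain \<epsilon>\<^sub>0 where \<epsilon>\<^sub>0: "\<epsilon>\<^sub>0 > 0" and interior: "\<And>z xb. z \<in> S - frontier S \<Longrightarrow> xb \<in> frontier S \<Longrightarrow>
      - \<epsilon>\<^sub>0 * norm (z - xb) \<le> f z \<Longrightarrow> mindir f z \<le> - \<tau>"
    using slope_qc_interior_uniform[OF cv qc \<tau>] unfolding S_def by blast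
  have bd: "\<tau> < \<bar>mindir f p\<bar>" if "p \<in> frontier S" for p
    using qc that less_INF_D unfolding slope_qc_def S_def by fastforce
  have f0: "f x = 0" if "x \<in> frontier S" for x
    using frontier_sublevel_eq_zero[OF convex_on_continuous[OF open_UNIV cv]] that by (simp add: S_def)
  have "closed S"
    unfolding S_def by (rule closed_Collect_le[OF convex_on_continuous[OF open_UNIV cv]]) simp
  have "mindir f y \<le> - \<tau>" if xb: "xb \<in> frontier S" and y: "- \<epsilon>\<^sub>0 * norm (y - xb) < f y" for xb y
  proof (cases "y \<in> S")
    case False
    moreover have "S \<noteq> {}"
      using xb \<open>closed S\<close> by (auto simp: frontier_def)
    ultimately show ?thesis
      using convex_slope_outside_sublevel[OF cv, of \<tau> y] bd by (simp add: S_def)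
  next
    case True
    show ?thesis
    proof (cases "y \<in> frontier S")
      case False
      with True show ?thesis
        using interior[OF _ xb] y by simp
    next
      case yfr: True
      have "y \<noteq> xb"
        using y f0[OF xb] by auto
      then have "mindir f y \<le> 0"
        using mindir_le_zero_of_eq[OF cv, of y xb] f0[OF yfr] f0[OF xb] by simp
      then show ?thesis
        using bd[OF yfr] by simp
    qed
  qed
  with \<epsilon>\<^sub>0 that show thesis
    by blast
qed

lemma slope_qcI:
  fixes f :: "'a::euclidean_space \<Rightarrow> real"
  defines "S \<equiv> {x. f x \<le> 0}"
  assumes cont: "continuous_on UNIV f" and \<sigma>: "\<sigma> > 0"
    and frontier: "\<And>x. x \<in> frontier S \<Longrightarrow> \<sigma> \<le> \<bar>mindir f x\<bar>"
    and near: "\<And>z xb. xb \<in> frontier S \<Longrightarrow> - \<sigma> * norm (z - xb) < f z \<Longrightarrow> \<sigma> \<le> \<bar>mindir f z\<bar>"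
  shows "slope_qc f (\<sigma> / 2)"
proof -
  have liminf: "ereal \<sigma> \<le> liminf (\<lambda>k. ereal \<bar>mindir f (z k)\<bar>)"
    if z: "\<forall>k. z k \<in> S - frontier S" and x: "\<forall>k. x k \<in> frontier S"
      and lim: "(\<lambda>k. (f (z k) - f (x k)) / norm (z k - x k)) \<longlonglongrightarrow> 0"
    for z x :: "nat \<Rightarrow> 'a"
  proof -
    have "\<forall>\<^sub>F k in sequentially. - \<sigma> < (f (z k) - f (x k)) / norm (z k - x k)"
      using order_tendstoD(1)[OF lim] \<sigma> by simp
    then have "\<forall>\<^sub>F k in sequentially. ereal \<sigma> \<le> ereal \<bar>mindir f (z k)\<bar>"
    proof eventually_elim
      case (elim k)
      moreover have "z k \<noteq> x k"
        using z x by (metis DiffD2)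
      moreover have "f (x k) = 0"
        using frontier_sublevel_eq_zero[OF cont] x by (simp add: S_def)
      ultimately have "- \<sigma> * norm (z k - x k) < f (z k)"
        by (simp add: less_divide_eq)
      then show ?case
        using near[of "x k" "z k"] x by simp
    qed
    then show ?thesis
      by (simp add: Liminf_bounded)
  qed
  have less: "ereal (\<sigma> / 2) < ereal \<sigma>"
    using \<sigma> by simp
  show ?thesis
    unfolding slope_qc_def S_def[symmetric]
  proof (intro conjI allI impI)
    have "ereal \<sigma> \<le> (INF x\<in>frontier S. ereal \<bar>mindir f x\<bar>)"
      using frontier by (intro INF_greatest) simp
    with less show "ereal (\<sigma> / 2) < (INF x\<in>frontier S. ereal \<bar>mindir f x\<bar>)"
      by (rule less_le_trans)
    fix z :: "nat \<Rightarrow> 'a"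
    assume "(\<forall>k. z k \<in> S - frontier S) \<and> (\<exists>x. (\<forall>k. x k \<in> frontier S) \<and>
        (\<lambda>k. (f (z k) - f (x k)) / norm (z k - x k)) \<longlonglongrightarrow> 0)"
    then show "ereal (\<sigma> / 2) < liminf (\<lambda>k. ereal \<bar>mindir f (z k)\<bar>)"
      using less liminf by (blast intro: less_le_trans)
  qed
qed

section \<open>Compact convex families\<close>

lemma compact_Inter_decreasing_closed:
  fixes L :: "real \<Rightarrow> 'a::topological_space set"
  assumes "compact K" and b: "b > 0"
    and closed: "\<And>t. 0 < t \<Longrightarrow> t \<le> b \<Longrightarrow> closed (L t)"
    and ne: "\<And>t. 0 < t \<Longrightarrow> t \<le> b \<Longrightarrow> K \<inter> L t \<noteq> {}"
    and mono: "\<And>s t. 0 < s \<Longrightarrow> s \<le> t \<Longrightarrow> L s \<subseteq> L t"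
  shows "K \<inter> (\<Inter>t\<in>{0<..b}. L t) \<noteq> {}"
proof (rule compact_imp_fip_image[OF \<open>compact K\<close>])
  fix T assume T: "finite T" "T \<subseteq> {0<..b}"
  show "K \<inter> (\<Inter>t\<in>T. L t) \<noteq> {}"
  proof (cases "T = {}")
    case True
    then show ?thesis using ne[of b] b by auto
  next
    case False
    then have "Min T \<in> T" "\<And>t. t \<in> T \<Longrightarrow> Min T \<le> t"
      using T(1) by auto
    then have "K \<inter> L (Min T) \<subseteq> K \<inter> (\<Inter>t\<in>T. L t)" "K \<inter> L (Min T) \<noteq> {}"
      using T(2) mono[of "Min T"] ne[of "Min T"] by force+
    then show ?thesis by blast
  qed
qed (use closed in auto)

lemma convex_on_cball_lipschitz:
  fixes \<phi> :: "'a::real_normed_vector \<Rightarrow> real"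
  assumes cv: "convex_on UNIV \<phi>" and M: "\<And>z. z \<in> cball x0 1 \<Longrightarrow> \<phi> z \<le> M"
    and m: "m \<le> \<phi> x0" and x: "norm (x - x0) \<le> 1"
  shows "\<bar>\<phi> x - \<phi> x0\<bar> \<le> (M - m) * norm (x - x0)"
proof (cases "x = x0")
  case False
  define t where "t = norm (x - x0)"
  define v where "v = (1 / t) *\<^sub>R (x - x0)"
  have t: "0 < t" "t \<le> 1"
    using False x by (auto simp: t_def)
  have v: "norm v = 1" "x = x0 + t *\<^sub>R v"
    using t by (simp_all add: v_def t_def)
  have "diff_quot \<phi> x0 v t \<le> diff_quot \<phi> x0 v 1"
    using diff_quot_mono[OF cv t] .
  also have "\<dots> \<le> M - m"
    using M[of "x0 + v"] m v(1) by (simp add: diff_quot_def dist_norm)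
  finally have up: "diff_quot \<phi> x0 v t \<le> M - m" .
  have "m - M \<le> \<phi> x0 - \<phi> (x0 - v)"
    using M[of "x0 - v"] m v(1) by (simp add: dist_norm)
  also have "\<dots> \<le> diff_quot \<phi> x0 v t"
    by (rule diff_quot_ge_backward_diff[OF cv t(1)])
  finally have "\<bar>diff_quot \<phi> x0 v t\<bar> \<le> M - m"
    using up by simp
  moreover have "\<phi> x - \<phi> x0 = t * diff_quot \<phi> x0 v t"
    using t by (simp add: diff_quot_def v(2))
  ultimately show ?thesis
    using t by (simp add: abs_mult t_def mult.commute mult_right_mono)
qed (use M[of x0] m in simp)

lemma continuous_on_uncurried_slice:
  assumes "continuous_on (I \<times> UNIV) (\<lambda>(i, x). G i x)"
  shows "continuous_on I (\<lambda>i. G i x)"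
  using continuous_on_compose2[OF assms continuous_on_Pair[OF continuous_on_id continuous_on_const]]
  by auto

lemma convex_on_tilt: "convex_on UNIV (\<lambda>x. c * (u \<bullet> (x - xb)))"
proof (rule convex_onI)
  fix x y :: 'a and t :: real
  have "(1 - t) *\<^sub>R x + t *\<^sub>R y - xb = (1 - t) *\<^sub>R (x - xb) + t *\<^sub>R (y - xb)"
    by (simp add: algebra_simps)
  then show "c * (u \<bullet> ((1 - t) *\<^sub>R x + t *\<^sub>R y - xb))
      \<le> (1 - t) * (c * (u \<bullet> (x - xb))) + t * (c * (u \<bullet> (y - xb)))"
    by (simp add: inner_add_right algebra_simps)
qed simp

lemma Lipc_less_imp_lipschitz:
  assumes "Lipc \<phi> < ereal L"
  shows "\<bar>\<phi> a - \<phi> b\<bar> \<le> L * norm (a - b)"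
proof (cases "a = b")
  case False
  have "ereal (\<bar>\<phi> a - \<phi> b\<bar> / norm (a - b)) \<le> Lipc \<phi>"
    unfolding Lipc_def using False
    by (auto intro: SUP_upper[of "(a, b)" _ "\<lambda>p. ereal (\<bar>\<phi> (fst p) - \<phi> (snd p)\<bar> / norm (fst p - snd p))", simplified])
  also have "\<dots> < ereal L"
    by (rule assms)
  finally show ?thesis
    using False by (simp add: divide_less_eq)
qed simp

lemma Lipc_tilt_le:
  fixes u xb :: "'a::real_inner"
  assumes c: "c \<ge> 0" and u: "norm u \<le> 1"
  shows "Lipc (\<lambda>x. F x - (F x + c * (u \<bullet> (x - xb)))) \<le> ereal c"
  unfolding Lipc_def
proof (rule SUP_least, clarsimp)
  fix a b :: 'a assume "a \<noteq> b"
  have "c * (u \<bullet> (a - xb)) - c * (u \<bullet> (b - xb)) = c * (u \<bullet> (a - b))"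
    by (simp add: inner_diff_right algebra_simps)
  then have "\<bar>c * (u \<bullet> (a - xb)) - c * (u \<bullet> (b - xb))\<bar> = c * \<bar>u \<bullet> (a - b)\<bar>"
    using c by (simp add: abs_mult)
  also have "\<dots> \<le> c * (norm u * norm (a - b))"
    using c by (intro mult_left_mono Cauchy_Schwarz_ineq2) auto
  also have "\<dots> \<le> c * norm (a - b)"
    using c u by (intro mult_left_mono) (auto simp: mult_left_le_one_le)
  finally show "\<bar>c * (u \<bullet> (b - xb)) - c * (u \<bullet> (a - xb))\<bar> / norm (a - b) \<le> c"
    using \<open>a \<noteq> b\<close> by (simp add: divide_le_eq abs_minus_commute)
qed

locale convex_family =
  fixes I :: "'i::t2_space set" and H :: "'i \<Rightarrow> 'a::euclidean_space \<Rightarrow> real"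
  assumes compact_index: "compact I" and index_nonempty: "I \<noteq> {}"
    and convex_member: "\<And>i. i \<in> I \<Longrightarrow> convex_on UNIV (H i)"
    and continuous_index: "\<And>x. continuous_on I (\<lambda>i. H i x)"
begin

lemma maxf_attained:
  obtains i where "i \<in> I" "H i x = maxf I H x"
proof -
  obtain i where i: "i \<in> I" "\<And>j. j \<in> I \<Longrightarrow> H j x \<le> H i x"
    using continuous_attains_sup[OF compact_index index_nonempty continuous_index] by blast
  then have "maxf I H x = H i x"
    unfolding maxf_def by (intro cSup_eq_maximum) auto
  with i that show thesis by simp
qed

lemma maxf_ge: "i \<in> I \<Longrightarrow> H i x \<le> maxf I H x"
  unfolding maxf_def
  by (intro cSUP_upper bounded_imp_bdd_above compact_imp_bounded compact_continuous_image
      continuous_index compact_index)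

lemma maxf_le: "(\<And>i. i \<in> I \<Longrightarrow> H i x \<le> c) \<Longrightarrow> maxf I H x \<le> c"
  unfolding maxf_def by (rule cSUP_least) (use index_nonempty in auto)

lemma convex_maxf: "convex_on UNIV (maxf I H)"
proof (rule convex_onI)
  fix x y and t :: real
  assume t: "0 < t" "t < 1"
  obtain i where i: "i \<in> I" "H i ((1 - t) *\<^sub>R x + t *\<^sub>R y) = maxf I H ((1 - t) *\<^sub>R x + t *\<^sub>R y)"
    using maxf_attained .
  have "H i ((1 - t) *\<^sub>R x + t *\<^sub>R y) \<le> (1 - t) * H i x + t * H i y"
    using convex_member[OF i(1)] t by (intro convex_onD) auto
  also have "\<dots> \<le> (1 - t) * maxf I H x + t * maxf I H y"
    using maxf_ge[OF i(1)] t by (intro add_mono mult_left_mono) auto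
  finally show "maxf I H ((1 - t) *\<^sub>R x + t *\<^sub>R y) \<le> (1 - t) * maxf I H x + t * maxf I H y"
    using i by simp
qed simp

lemma continuous_maxf: "continuous_on UNIV (maxf I H)"
  using convex_on_continuous[OF open_UNIV convex_maxf] .

lemma solset_eq: "solset I H = {x. maxf I H x \<le> 0}"
  unfolding solset_def using maxf_ge maxf_le by (fastforce intro: order_trans)

lemma maxf_add: "maxf I (\<lambda>i x. H i x + L x) x = maxf I H x + L x"
proof -
  obtain i where i: "i \<in> I" "H i x = maxf I H x"
    using maxf_attained .
  have "maxf I (\<lambda>i x. H i x + L x) x = H i x + L x"
    unfolding maxf_def
  proof (rule cSup_eq_maximum)
    show "H i x + L x \<in> (\<lambda>i. H i x + L x) ` I"
      using i(1) by blast
    show "z \<le> H i x + L x" if "z \<in> (\<lambda>i. H i x + L x) ` I" for z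
      using that maxf_ge i(2) by force
  qed
  with i show ?thesis by simp
qed

lemma active_add: "active I (\<lambda>i x. H i x + L x) x = active I H x"
  unfolding active_def maxf_add by simp

lemma convex_family_add: "convex_on UNIV L \<Longrightarrow> convex_family I (\<lambda>i x. H i x + L x)"
  by unfold_locales
    (auto intro: convex_on_add convex_member continuous_intros continuous_index
      simp: compact_index index_nonempty)

lemma uniform_lipschitz_near:
  obtains L where "L \<ge> 0"
    "\<And>i x. i \<in> I \<Longrightarrow> norm (x - a) \<le> 1 \<Longrightarrow> \<bar>H i x - H i a\<bar> \<le> L * norm (x - a)"
proof -
  obtain z where "\<And>x. x \<in> cball a 1 \<Longrightarrow> maxf I H x \<le> maxf I H z"
    using continuous_attains_sup[OF compact_cball _ continuous_on_subset[OF continuous_maxf]]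
    by (metis cball_eq_empty not_one_less_zero subset_UNIV)
  moreover obtain j where "j \<in> I" "\<And>i. i \<in> I \<Longrightarrow> H j a \<le> H i a"
    using continuous_attains_inf[OF compact_index index_nonempty continuous_index] by blast
  ultimately have "\<bar>H i x - H i a\<bar> \<le> (maxf I H z - H j a) * norm (x - a)"
    if "i \<in> I" "norm (x - a) \<le> 1" for i x
    using that convex_on_cball_lipschitz[OF convex_member] maxf_ge by (meson order_trans)
  moreover have "H j a \<le> maxf I H z"
    using \<open>j \<in> I\<close> maxf_ge \<open>\<And>x. x \<in> cball a 1 \<Longrightarrow> _\<close>[of a] by (meson centre_in_cball order_trans zero_le_one)
  ultimately show thesis
    using that[of "maxf I H z - H j a"] by simp
qed

lemma continuous_on_uncurried: "continuous_on (I \<times> UNIV) (\<lambda>(i, x). H i x)"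
  unfolding continuous_on_topological
proof (intro ballI allI impI)
  fix p B assume p: "p \<in> I \<times> UNIV" and B: "open B" "(\<lambda>(i, x). H i x) p \<in> B"
  obtain i0 x0 where p0: "p = (i0, x0)" and i0: "i0 \<in> I"
    using p by auto
  obtain e where e: "e > 0" "ball (H i0 x0) e \<subseteq> B"
    using B p0 by (auto elim!: openE)
  obtain U where U: "open U" "i0 \<in> U" "\<And>i. i \<in> I \<Longrightarrow> i \<in> U \<Longrightarrow> \<bar>H i x0 - H i0 x0\<bar> < e/2"
    using continuous_index[of x0] i0 e(1) unfolding continuous_on_topological
    by (metis open_ball centre_in_ball half_gt_zero mem_ball dist_real_def abs_minus_commute)
  obtain L where L: "L \<ge> 0"
    "\<And>i x. i \<in> I \<Longrightarrow> norm (x - x0) \<le> 1 \<Longrightarrow> \<bar>H i x - H i x0\<bar> \<le> L * norm (x - x0)"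
    using uniform_lipschitz_near[where a=x0] by blast
  define \<delta> where "\<delta> = min 1 (e / (2 * L + 2))"
  have \<delta>: "\<delta> > 0" "\<delta> \<le> 1" "L * \<delta> < e / 2"
    using e L(1) by (auto simp: \<delta>_def min_mult_distrib_left field_simps intro: min.strict_coboundedI2)
  show "\<exists>A. open A \<and> p \<in> A \<and> (\<forall>q\<in>I \<times> UNIV. q \<in> A \<longrightarrow> (\<lambda>(i, x). H i x) q \<in> B)"
  proof (intro exI[of _ "U \<times> ball x0 \<delta>"] conjI ballI impI)
    fix q assume "q \<in> I \<times> UNIV" "q \<in> U \<times> ball x0 \<delta>"
    then obtain i x where q: "q = (i, x)" "i \<in> I" "i \<in> U" "x \<in> ball x0 \<delta>"
      by auto
    then have i: "i \<in> I" "i \<in> U" and x: "norm (x - x0) < \<delta>"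
      by (auto simp: dist_norm norm_minus_commute)
    have "\<bar>H i x - H i x0\<bar> \<le> L * \<delta>"
      using L(2)[OF i(1), of x] x \<delta>(2) L(1) by (smt (verit) mult_left_mono)
    then have "\<bar>H i x - H i0 x0\<bar> < e"
      using U(3)[OF i] \<delta>(3) by linarith
    then show "(\<lambda>(i, x). H i x) q \<in> B"
      using e(2) q(1) by (auto simp: dist_real_def)
  qed (use U \<delta> p0 in \<open>auto simp: open_Times\<close>)
qed

text \<open>For small \<open>t\<close>, an index active at
  \<open>y + t h\<close> nearly realises the one-sided derivative of the max-function at \<open>y\<close>; the closed
  sets of such indices shrink as \<open>t \<down> 0\<close>, so by compactness of \<open>I\<close> one index serves for
  all \<open>t\<close>, and it is active at \<open>y\<close>.\<close>

lemma maxf_dirder_le_diff_quot_index: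
  assumes t: "0 < t" "t \<le> 1/2"
  obtains i where "i \<in> I" "dirder (maxf I H) y h \<le> diff_quot (H i) y h t"
    "maxf I H y - H i y \<le> 2 * t * (maxf I H (y + h) - maxf I H y - dirder (maxf I H) y h)"
proof -
  define g where "g = maxf I H"
  define D where "D = dirder g y h"
  obtain i where i: "i \<in> I" "H i (y + t *\<^sub>R h) = g (y + t *\<^sub>R h)"
    using maxf_attained unfolding g_def by metis
  have cv: "convex_on UNIV (H i)"
    using convex_member[OF i(1)] .
  have "g y + t * D \<le> g (y + t *\<^sub>R h)"
    unfolding D_def g_def using convex_on_dirder_le[OF convex_maxf] t by simp
  then have step: "g y - H i y + t * D \<le> t * diff_quot (H i) y h t"
    using i(2) t by (simp add: diff_quot_def)
  moreover have "g y - H i y \<ge> 0"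
    unfolding g_def using maxf_ge[OF i(1)] by simp
  ultimately have "t * D \<le> t * diff_quot (H i) y h t"
    by linarith
  then have "D \<le> diff_quot (H i) y h t"
    using t by simp
  moreover have "diff_quot (H i) y h t \<le> g (y + h) - H i y"
  proof -
    have "diff_quot (H i) y h t \<le> diff_quot (H i) y h 1"
      using diff_quot_mono[OF cv t(1)] t by simp
    also have "\<dots> \<le> g (y + h) - H i y"
      using maxf_ge[OF i(1), of "y + h"] by (simp add: diff_quot_def g_def)
    finally show ?thesis .
  qed
  ultimately have "(1 - t) * (g y - H i y) \<le> t * (g (y + h) - g y - D)"
    using step mult_left_mono[OF \<open>diff_quot (H i) y h t \<le> _\<close>, of t] t
    by (simp add: algebra_simps)
  moreover have "(g y - H i y) / 2 \<le> (1 - t) * (g y - H i y)"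
    using mult_right_mono[of "1/2" "1 - t" "g y - H i y"] t \<open>g y - H i y \<ge> 0\<close> by simp
  ultimately show thesis
    using that[of i] i(1) \<open>D \<le> _\<close> unfolding g_def D_def by simp
qed

lemma maxf_dirder_le_diff_quot_uniform_index:
  obtains i where "i \<in> I" "\<And>t. 0 < t \<Longrightarrow> t \<le> 1/2 \<Longrightarrow>
    dirder (maxf I H) y h \<le> diff_quot (H i) y h t \<and>
    maxf I H y - H i y \<le> 2 * t * (maxf I H (y + h) - maxf I H y - dirder (maxf I H) y h)"
proof -
  define g where "g = maxf I H"
  define D where "D = dirder g y h"
  define A where "A = g (y + h) - g y - D"
  define L where "L t = {i\<in>I. D \<le> diff_quot (H i) y h t \<and> g y - H i y \<le> 2 * t * A}" for t
  have A: "A \<ge> 0"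
    using convex_on_dirder_le[OF convex_maxf, of 1 y h] by (simp add: A_def D_def g_def)
  have "I \<inter> (\<Inter>t\<in>{0<..1/2}. L t) \<noteq> {}"
  proof (rule compact_Inter_decreasing_closed[OF compact_index])
    fix t :: real assume t: "0 < t" "t \<le> 1/2"
    have "L t = (I \<inter> (\<lambda>i. diff_quot (H i) y h t - D) -` {0..})
        \<inter> (I \<inter> (\<lambda>i. H i y - g y + 2 * t * A) -` {0..})"
      by (auto simp: L_def)
    moreover have "continuous_on I (\<lambda>i. diff_quot (H i) y h t - D)"
      unfolding diff_quot_def by (intro continuous_intros continuous_index) (use t in auto)
    moreover have "continuous_on I (\<lambda>i. H i y - g y + 2 * t * A)"
      by (intro continuous_intros continuous_index)
    ultimately show "closed (L t)"
      using compact_imp_closed[OF compact_index] by (simp add: closed_Int continuous_closed_preimage)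
    obtain i where "i \<in> I" "D \<le> diff_quot (H i) y h t" "g y - H i y \<le> 2 * t * A"
      using maxf_dirder_le_diff_quot_index[OF t, of y h] unfolding g_def D_def A_def by blast
    then show "I \<inter> L t \<noteq> {}"
      unfolding L_def by blast
  next
    fix s t :: real assume "0 < s" "s \<le> t"
    then have "diff_quot (H i) y h s \<le> diff_quot (H i) y h t" "2 * s * A \<le> 2 * t * A" if "i \<in> I" for i
      using diff_quot_mono[OF convex_member[OF that]] A by (auto intro: mult_right_mono)
    then show "L s \<subseteq> L t"
      unfolding L_def by (auto intro: order_trans)
  qed simp
  then obtain i where "i \<in> I" "i \<in> (\<Inter>t\<in>{0<..1/2}. L t)"
    by blast
  with that show thesis
    by (auto simp: L_def g_def D_def A_def)
qed

lemma dirder_maxf_le_active: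
  obtains i where "i \<in> active I H y" "dirder (maxf I H) y h \<le> dirder (H i) y h"
proof -
  define g where "g = maxf I H"
  define D where "D = dirder g y h"
  define A where "A = g (y + h) - g y - D"
  obtain i where i: "i \<in> I"
    and uniform: "\<And>t. 0 < t \<Longrightarrow> t \<le> 1/2 \<Longrightarrow> D \<le> diff_quot (H i) y h t \<and> g y - H i y \<le> 2 * t * A"
    using maxf_dirder_le_diff_quot_uniform_index unfolding g_def D_def A_def by blast
  have A: "A \<ge> 0"
    using convex_on_dirder_le[OF convex_maxf, of 1 y h] by (simp add: A_def D_def g_def)
  have "g y - H i y \<le> 0 + e" if "e > 0" for e
  proof -
    define t where "t = min (1/2) (e / (2 * A + 1))"
    have "0 < t"
      unfolding t_def using A that by (simp add: add_nonneg_pos)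
    moreover have "t \<le> 1/2" and t_le: "t \<le> e / (2 * A + 1)"
      unfolding t_def by (rule min.cobounded1, rule min.cobounded2)
    ultimately have "g y - H i y \<le> 2 * t * A"
      using uniform by blast
    also have "\<dots> \<le> 2 * (e / (2 * A + 1)) * A"
      using A t_le by (intro mult_right_mono) auto
    also have "\<dots> \<le> e"
      using A that by (simp add: pos_divide_le_eq algebra_simps)
    finally show ?thesis by simp
  qed
  then have "g y - H i y \<le> 0"
    by (rule field_le_epsilon)
  then have "i \<in> active I H y"
    using i maxf_ge[OF i, of y] by (simp add: active_def g_def)
  moreover have "D \<le> dirder (H i) y h"
  proof (rule dirder_greatest[OF convex_member[OF i]])
    fix t :: real assume "t > 0"
    then have "D \<le> diff_quot (H i) y h (min t (1/2))"
      using uniform[of "min t (1/2)"] by simp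
    also have "\<dots> \<le> diff_quot (H i) y h t"
      using diff_quot_mono[OF convex_member[OF i]] \<open>t > 0\<close> by simp
    finally show "D \<le> diff_quot (H i) y h t" .
  qed
  ultimately show thesis
    using that by (simp add: D_def g_def)
qed

lemma mindir_maxf_perturbation_le:
  assumes G: "convex_family I G" and act: "active I G y \<subseteq> active I H y"
    and lip: "\<And>i a b. i \<in> I \<Longrightarrow> \<bar>(G i a - H i a) - (G i b - H i b)\<bar> \<le> \<epsilon> * norm (a - b)"
  shows "mindir (maxf I G) y \<le> mindir (maxf I H) y + \<epsilon>"
proof (rule field_le_epsilon)
  fix \<delta> :: real assume "\<delta> > 0"
  then obtain h where h: "norm h = 1" "dirder (maxf I H) y h < mindir (maxf I H) y + \<delta>"
    using mindir_less_obtains_dirder[of "maxf I H" y] by (metis less_add_same_cancel1)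
  obtain i where i: "i \<in> active I G y" "dirder (maxf I G) y h \<le> dirder (G i) y h"
    using convex_family.dirder_maxf_le_active[OF G] .
  then have iI: "i \<in> I" "H i y = maxf I H y"
    using act by (auto simp: active_def)
  have "mindir (maxf I G) y \<le> dirder (maxf I G) y h"
    by (rule mindir_le_dirder[OF convex_family.convex_maxf[OF G] h(1)])
  also have "\<dots> \<le> dirder (G i) y h"
    by (rule i(2))
  also have "\<dots> \<le> dirder (H i) y h + \<epsilon>"
    using dirder_le_lipschitz_perturbation[OF convex_member[OF iI(1)]
        convex_family.convex_member[OF G iI(1)] lip[OF iI(1)], of y h] h(1) by simp
  also have "dirder (H i) y h \<le> dirder (maxf I H) y h"
    by (rule dirder_le_of_touching_above[OF convex_member[OF iI(1)] convex_maxf maxf_ge[OF iI(1)] iI(2)])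
  finally show "mindir (maxf I G) y \<le> mindir (maxf I H) y + \<epsilon> + \<delta>"
    using h(2) by linarith
qed

lemma tau_min_le_of_slope:
  assumes ne: "solset I H \<noteq> {}" and \<kappa>: "\<kappa> > 0"
    and slope: "\<And>x. maxf I H x > 0 \<Longrightarrow> mindir (maxf I H) x \<le> - \<kappa>"
  shows "tau_min I H \<le> ereal (2 / \<kappa>)"
  using convex_error_bound[OF convex_maxf \<kappa> slope] ne \<kappa>
  by (intro tau_min_leI) (auto simp: solset_eq)

lemma perturbation_slope_le:
  assumes G: "convex_family I G" and xb: "\<And>i. i \<in> I \<Longrightarrow> G i xb = H i xb"
    and lip: "\<And>i a b. i \<in> I \<Longrightarrow> \<bar>(G i a - H i a) - (G i b - H i b)\<bar> \<le> \<epsilon> * norm (a - b)"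
    and act: "\<And>x. mindir (maxf I H) x < 0 \<Longrightarrow> active I G x \<subseteq> active I H x"
    and slope: "\<And>y. - \<epsilon> * norm (y - xb) < maxf I H y \<Longrightarrow> mindir (maxf I H) y \<le> - \<tau>"
    and \<tau>: "\<tau> > 0" and y: "maxf I G y > 0"
  shows "mindir (maxf I G) y \<le> - \<tau> + \<epsilon>"
proof -
  have "maxf I G y \<le> maxf I H y + \<epsilon> * norm (y - xb)"
  proof (rule convex_family.maxf_le[OF G])
    fix i assume "i \<in> I"
    then show "G i y \<le> maxf I H y + \<epsilon> * norm (y - xb)"
      using lip[of i y xb] xb[of i] maxf_ge[of i y] by simp
  qed
  then have "mindir (maxf I H) y \<le> - \<tau>"
    using slope y by simp
  then have "active I G y \<subseteq> active I H y"
    using act \<tau> by simp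
  then show ?thesis
    using mindir_maxf_perturbation_le[OF G _ lip] \<open>mindir (maxf I H) y \<le> - \<tau>\<close> by fastforce
qed

lemma tau_min_perturbation_le:
  assumes G: "convex_family I G" and xb: "xb \<in> frontier (solset I H)"
    and agree: "\<And>i. i \<in> I \<Longrightarrow> G i xb = H i xb"
    and lip: "\<And>i a b. i \<in> I \<Longrightarrow> \<bar>(G i a - H i a) - (G i b - H i b)\<bar> \<le> \<epsilon> * norm (a - b)"
    and act: "\<And>x. mindir (maxf I H) x < 0 \<Longrightarrow> active I G x \<subseteq> active I H x"
    and slope: "\<And>y. - \<epsilon> * norm (y - xb) < maxf I H y \<Longrightarrow> mindir (maxf I H) y \<le> - \<tau>"
    and \<tau>: "\<tau> > 0" and \<epsilon>: "\<epsilon> \<le> \<tau> / 2"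
  shows "tau_min I G \<le> ereal (4 / \<tau>)"
proof -
  interpret G: convex_family I G
    by (rule G)
  have "maxf I G xb = maxf I H xb"
    unfolding maxf_def using agree by (auto intro: SUP_cong)
  also have "\<dots> = 0"
    using frontier_sublevel_eq_zero[OF continuous_maxf] xb by (simp add: solset_eq)
  finally have "solset I G \<noteq> {}"
    unfolding G.solset_eq by (metis (mono_tags) empty_iff mem_Collect_eq order_refl)
  moreover have "mindir (maxf I G) y \<le> - (\<tau> / 2)" if "maxf I G y > 0" for y
    using perturbation_slope_le[OF G agree lip act slope \<tau> that] \<epsilon> by simp
  ultimately have "tau_min I G \<le> ereal (2 / (\<tau> / 2))"
    using \<tau> by (intro G.tau_min_le_of_slope) auto
  then show ?thesis
    by simp
qed

lemma slope_qc_imp_perturbation_error_bound: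
  assumes qc: "slope_qc (maxf I H) \<tau>" and \<tau>: "\<tau> > 0"
  obtains \<epsilon> where "\<epsilon> > 0" "perturbation_error_bound I H (4 / \<tau>) \<epsilon>"
proof -
  obtain \<epsilon>\<^sub>0 where \<epsilon>\<^sub>0: "\<epsilon>\<^sub>0 > 0" and slope: "\<And>xb y. xb \<in> frontier (solset I H) \<Longrightarrow>
      - \<epsilon>\<^sub>0 * norm (y - xb) < maxf I H y \<Longrightarrow> mindir (maxf I H) y \<le> - \<tau>"
    using slope_qc_imp_uniform_slope[OF convex_maxf qc \<tau>] by (metis solset_eq)
  define \<epsilon> where "\<epsilon> = min \<epsilon>\<^sub>0 (\<tau> / 2)"
  have slope_\<epsilon>: "mindir (maxf I H) y \<le> - \<tau>"
    if "xb \<in> frontier (solset I H)" "- \<epsilon> * norm (y - xb) < maxf I H y" for xb y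
  proof -
    have "- \<epsilon>\<^sub>0 * norm (y - xb) \<le> - \<epsilon> * norm (y - xb)"
      by (simp add: \<epsilon>_def mult_right_mono)
    then show ?thesis
      using slope that by simp
  qed
  have "perturbation_error_bound I H (4 / \<tau>) \<epsilon>"
    unfolding perturbation_error_bound_def
  proof (intro allI impI, elim conjE)
    fix G :: "'i \<Rightarrow> 'a \<Rightarrow> real"
    txt \<open>The inclusion of active indices where the slope of \<open>f\<close> is positive is not needed here.\<close>
    assume cont: "continuous_on (I \<times> UNIV) (\<lambda>(i, x). G i x)"
      and cvx: "\<forall>i\<in>I. convex_on UNIV (G i)"
      and agree: "{z \<in> frontier (solset I H). \<forall>i\<in>I. H i z = G i z} \<noteq> {}"
      and lipc: "(SUP i\<in>I. Lipc (\<lambda>x. H i x - G i x)) < ereal \<epsilon>"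
      and act: "\<forall>x. mindir (maxf I H) x < 0 \<longrightarrow> active I G x \<subseteq> active I H x"
    have G: "convex_family I G"
      using cvx continuous_on_uncurried_slice[OF cont]
      by unfold_locales (auto simp: compact_index index_nonempty)
    obtain xb where xb: "xb \<in> frontier (solset I H)" "\<And>i. i \<in> I \<Longrightarrow> G i xb = H i xb"
      using agree by auto
    have lip: "\<bar>(G i a - H i a) - (G i b - H i b)\<bar> \<le> \<epsilon> * norm (a - b)" if "i \<in> I" for i a b
    proof -
      have "Lipc (\<lambda>x. H i x - G i x) < ereal \<epsilon>"
        using lipc SUP_upper[OF that] by (rule le_less_trans[rotated])
      from Lipc_less_imp_lipschitz[OF this, of a b] show ?thesis
        by (simp add: abs_minus_commute algebra_simps)
    qed
    show "tau_min I G \<le> ereal (4 / \<tau>)"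
      using tau_min_perturbation_le[OF G xb lip act[rule_format] slope_\<epsilon>[OF xb(1)] \<tau>]
      by (simp add: \<epsilon>_def)
  qed
  moreover have "\<epsilon> > 0"
    using \<epsilon>\<^sub>0 \<tau> by (simp add: \<epsilon>_def)
  ultimately show thesis
    using that by blast
qed

lemma perturbation_error_bound_imp_tilt_error_bound:
  assumes B: "perturbation_error_bound I H c \<epsilon>" and \<epsilon>: "\<epsilon> > 0"
  shows "tilt_error_bound I H c (\<epsilon> / 2)"
  unfolding tilt_error_bound_def
proof (intro ballI allI impI)
  fix xb and u :: 'a assume xb: "xb \<in> frontier (solset I H)" and u: "norm u \<le> 1"
  define L where "L x = \<epsilon> / 2 * (u \<bullet> (x - xb))" for x
  interpret G: convex_family I "\<lambda>i x. H i x + L x"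
    unfolding L_def by (rule convex_family_add[OF convex_on_tilt])
  have "tau_min I (\<lambda>i x. H i x + L x) \<le> ereal c"
  proof (rule B[unfolded perturbation_error_bound_def, rule_format], intro conjI)
    show "continuous_on (I \<times> UNIV) (\<lambda>(i, x). H i x + L x)"
      by (rule G.continuous_on_uncurried)
    show "\<forall>i\<in>I. convex_on UNIV (\<lambda>x. H i x + L x)"
      using G.convex_member by blast
    show "{z \<in> frontier (solset I H). \<forall>i\<in>I. H i z = H i z + L z} \<noteq> {}"
      using xb by (auto simp: L_def)
    have "(SUP i\<in>I. Lipc (\<lambda>x. H i x - (H i x + L x))) \<le> ereal (\<epsilon> / 2)"
      unfolding L_def using \<epsilon> u by (intro SUP_least Lipc_tilt_le) auto
    then show "(SUP i\<in>I. Lipc (\<lambda>x. H i x - (H i x + L x))) < ereal \<epsilon>"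
      using \<epsilon> by (simp add: le_less_trans)
  qed (simp_all add: active_add)
  then show "tau_min I (\<lambda>i x. H i x + \<epsilon> / 2 * (u \<bullet> (x - xb))) \<le> ereal c"
    by (simp add: L_def)
qed

text \<open>Tilting \<open>f\<close> by \<open>\<langle>\<eta> v - w, x - x\<^sub>b\<rangle>\<close>, where \<open>w\<close> is a subgradient at \<open>z\<close>, keeps the tilted
  function above the affine function \<open>l\<close>, whose gradient has norm \<open>\<eta>\<close>. So the tilted
  solution set lies in the half-space \<open>l \<le> 0\<close>, at distance at least \<open>l(y)/\<eta>\<close> from \<open>y\<close>,
  and the error bound turns this into an upper bound on \<open>l(y)\<close>.\<close>

lemma tilt_error_bound_affine_minorant:
  assumes tilt: "tilt_error_bound I H c \<epsilon>" and \<epsilon>: "\<epsilon> > 0"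
    and xb: "xb \<in> frontier (solset I H)"
    and w: "\<And>x. maxf I H z + w \<bullet> (x - z) \<le> maxf I H x"
    and \<eta>: "\<eta> > 0" and v: "norm v = 1" and a: "norm (\<eta> *\<^sub>R v - w) \<le> \<epsilon>"
    and y: "maxf I H y + (\<eta> *\<^sub>R v - w) \<bullet> (y - xb) > 0"
  shows "maxf I H z + w \<bullet> (xb - z) + \<eta> * (v \<bullet> (y - xb))
           \<le> c * \<eta> * (maxf I H y + (\<eta> *\<^sub>R v - w) \<bullet> (y - xb))"
proof -
  define l where "l x = maxf I H z + w \<bullet> (xb - z) + \<eta> * (v \<bullet> (x - xb))" for x
  define u where "u = (1 / \<epsilon>) *\<^sub>R (\<eta> *\<^sub>R v - w)"
  define G where "G = (\<lambda>i x. H i x + \<epsilon> * (u \<bullet> (x - xb)))"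
  interpret G: convex_family I G
    unfolding G_def by (rule convex_family_add[OF convex_on_tilt])
  have maxG: "maxf I G x = maxf I H x + (\<eta> *\<^sub>R v - w) \<bullet> (x - xb)" for x
    using \<epsilon> by (simp add: G_def maxf_add u_def)
  have "norm u \<le> 1"
    using a \<epsilon> by (simp add: u_def divide_le_eq)
  then have "tau_min I G \<le> ereal c"
    using tilt xb unfolding tilt_error_bound_def G_def by blast
  then have ne: "solset I G \<noteq> {}" and dist: "infdist y (solset I G) \<le> c * maxf I G y"
    using tau_min_le_imp_infdist_le[of I G c y] y maxG by auto
  have "l y / \<eta> \<le> infdist y (solset I G)"
  proof (rule infdist_greatest[OF ne])
    fix x assume "x \<in> solset I G"
    then have "l x \<le> 0"
      using w[of x] by (simp add: G.solset_eq maxG l_def inner_diff_left inner_diff_right algebra_simps)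
    then have "l y \<le> \<eta> * (v \<bullet> (y - x))"
      by (simp add: l_def inner_diff_right algebra_simps)
    also have "\<dots> \<le> \<eta> * dist y x"
      using \<eta> v norm_cauchy_schwarz[of v "y - x"] by (simp add: dist_norm)
    finally show "l y / \<eta> \<le> dist y x"
      using \<eta> by (simp add: pos_divide_le_eq mult.commute)
  qed
  then have "l y \<le> \<eta> * infdist y (solset I G)"
    using \<eta> by (simp add: pos_divide_le_eq mult.commute)
  also have "\<dots> \<le> \<eta> * (c * maxf I G y)"
    using dist \<eta> by (simp add: mult_left_mono)
  finally show ?thesis
    by (simp add: l_def maxG mult.commute mult.left_commute)
qed

lemma tilt_error_bound_frontier_slope:
  assumes tilt: "tilt_error_bound I H c \<epsilon>" "\<epsilon> > 0" and c: "c > 0"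
    and \<eta>: "0 < \<eta>" "\<eta> \<le> \<epsilon> / 2" "c * \<eta> \<le> 1 / 4"
    and xb: "xb \<in> frontier (solset I H)"
  shows "\<eta> / 3 \<le> \<bar>mindir (maxf I H) xb\<bar>"
proof (rule ccontr)
  define f where "f = maxf I H"
  define s where "s = \<bar>mindir f xb\<bar>"
  assume "\<not> \<eta> / 3 \<le> \<bar>mindir (maxf I H) xb\<bar>"
  then have s: "s < \<eta> / 3" "mindir f xb \<le> s"
    by (simp_all add: s_def f_def)
  have cf: "convex_on UNIV f"
    unfolding f_def by (rule convex_maxf)
  have f0: "f xb = 0"
    using frontier_sublevel_eq_zero[OF continuous_maxf] xb by (simp add: f_def solset_eq)
  obtain w where w: "norm w \<le> s" "\<And>x. f xb + w \<bullet> (x - xb) \<le> f x"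
    using convex_on_subgradient_norm_le_mindir[OF cf] unfolding s_def by blast
  obtain v where v: "norm v = 1" "dirder f xb v < mindir f xb + \<eta> / 6"
    using mindir_less_obtains_dirder[of f xb "mindir f xb + \<eta> / 6"] \<eta>(1) by auto
  obtain t where t: "0 < t" "diff_quot f xb v t < mindir f xb + \<eta> / 6"
    using dirder_less_obtains_diff_quot[OF cf v(2) zero_less_one] by blast
  define y where "y = xb + t *\<^sub>R v"
  have "norm (\<eta> *\<^sub>R v - w) \<le> \<eta> + s"
    using norm_triangle_ineq4[of "\<eta> *\<^sub>R v" w] v(1) w(1) \<eta>(1) by simp
  then have a: "norm (\<eta> *\<^sub>R v - w) \<le> \<epsilon>"
    using s \<eta> by linarith
  have gy: "f y + (\<eta> *\<^sub>R v - w) \<bullet> (y - xb) = f y + \<eta> * t - t * (w \<bullet> v)"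
    using v(1) by (simp add: y_def inner_diff_left dot_square_norm algebra_simps)
  have "t * (w \<bullet> v) \<le> f y"
    using w(2)[of y] f0 by (simp add: y_def)
  then have pos: "0 < f y + (\<eta> *\<^sub>R v - w) \<bullet> (y - xb)"
    using gy mult_pos_pos[OF \<eta>(1) t(1)] by linarith
  have "f y < t * mindir f xb + \<eta> * t / 6"
    using t f0 by (simp add: diff_quot_def y_def pos_divide_less_eq algebra_simps)
  moreover have "- (w \<bullet> v) \<le> s"
    using norm_cauchy_schwarz[of "- w" v] v(1) w(1) by simp
  then have "- (t * (w \<bullet> v)) \<le> t * s"
    using mult_left_mono[of "- (w \<bullet> v)" s t] t(1) by simp
  moreover have "t * mindir f xb \<le> t * s" "t * s \<le> \<eta> * t / 3"
    using s t(1) by (simp_all add: mult_left_mono)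
  ultimately have "f y + (\<eta> *\<^sub>R v - w) \<bullet> (y - xb) < 2 * (\<eta> * t)"
    using gy mult_pos_pos[OF \<eta>(1) t(1)] by linarith
  moreover have "\<eta> * t \<le> c * \<eta> * (f y + (\<eta> *\<^sub>R v - w) \<bullet> (y - xb))"
    using tilt_error_bound_affine_minorant[OF tilt xb w(2)[unfolded f_def] \<eta>(1) v(1) a pos[unfolded f_def]]
      v(1) f0 by (simp add: f_def y_def dot_square_norm)
  ultimately have "\<eta> * t < (c * \<eta>) * (2 * (\<eta> * t))"
    using c \<eta>(1) by (smt (verit) mult_pos_pos mult_strict_left_mono)
  also have "\<dots> \<le> (1 / 4) * (2 * (\<eta> * t))"
    using \<eta>(1,3) t(1) by (intro mult_right_mono) auto
  finally show False
    using \<eta>(1) t(1) by simp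
qed

lemma tilt_error_bound_near_frontier_slope:
  assumes tilt: "tilt_error_bound I H c \<epsilon>" "\<epsilon> > 0"
    and \<eta>: "0 < \<eta>" "\<eta> \<le> \<epsilon> / 2" "c * \<eta> \<le> 1 / 4"
    and xb: "xb \<in> frontier (solset I H)"
    and z: "- (\<eta> / 3) * norm (z - xb) < maxf I H z"
  shows "\<eta> / 3 \<le> \<bar>mindir (maxf I H) z\<bar>"
proof (rule ccontr)
  define f where "f = maxf I H"
  define s where "s = \<bar>mindir f z\<bar>"
  define R where "R = norm (z - xb)"
  define v where "v = (1 / R) *\<^sub>R (z - xb)"
  assume "\<not> \<eta> / 3 \<le> \<bar>mindir (maxf I H) z\<bar>"
  then have s: "s < \<eta> / 3"
    by (simp add: s_def f_def)
  have f0: "f xb = 0"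
    using frontier_sublevel_eq_zero[OF continuous_maxf] xb by (simp add: f_def solset_eq)
  then have "z \<noteq> xb"
    using z by (auto simp: f_def)
  then have R: "R > 0"
    by (simp add: R_def)
  have v: "norm v = 1" "v \<bullet> (z - xb) = R"
    using R by (simp_all add: v_def R_def dot_square_norm power2_eq_square)
  obtain w where w: "norm w \<le> s" "\<And>x. f z + w \<bullet> (x - z) \<le> f x"
    using convex_on_subgradient_norm_le_mindir[OF convex_maxf] unfolding s_def f_def by blast
  have "norm (\<eta> *\<^sub>R v - w) \<le> \<eta> + s"
    using norm_triangle_ineq4[of "\<eta> *\<^sub>R v" w] v(1) w(1) \<eta>(1) by simp
  then have a: "norm (\<eta> *\<^sub>R v - w) \<le> \<epsilon>"
    using s \<eta> by linarith
  define l where "l = f z + w \<bullet> (xb - z) + \<eta> * R"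
  have "(\<eta> *\<^sub>R v - w) \<bullet> (z - xb) = \<eta> * R - w \<bullet> (z - xb)"
    using v(2) by (simp add: inner_diff_left)
  moreover have "w \<bullet> (xb - z) = - (w \<bullet> (z - xb))"
    by (simp add: inner_diff_right)
  ultimately have gz: "f z + (\<eta> *\<^sub>R v - w) \<bullet> (z - xb) = l"
    by (simp add: l_def)
  have "- (w \<bullet> (xb - z)) \<le> s * R"
    using norm_cauchy_schwarz[of "- w" "xb - z"] w(1) R
    by (simp add: R_def norm_minus_commute) (metis mult_right_mono norm_ge_zero order_trans)
  moreover have "s * R \<le> \<eta> / 3 * R"
    using s R by simp
  ultimately have l: "l > \<eta> / 3 * R"
    using z by (simp add: l_def f_def R_def)
  then have lpos: "0 < l"
    using R \<eta>(1) by (smt (verit) mult_pos_pos divide_pos_pos zero_less_numeral)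
  then have "l \<le> c * \<eta> * l"
    using tilt_error_bound_affine_minorant[OF tilt xb w(2)[unfolded f_def] \<eta>(1) v(1) a, where y=z]
      gz v(2) by (simp add: f_def l_def add.assoc)
  also have "\<dots> \<le> l / 4"
    using mult_right_mono[OF \<eta>(3), of l] lpos by simp
  finally show False
    using lpos by simp
qed

lemma tilt_error_bound_imp_slope_qc:
  assumes tilt: "tilt_error_bound I H c \<epsilon>" and c: "c > 0" and \<epsilon>: "\<epsilon> > 0"
  defines "\<eta> \<equiv> min (\<epsilon> / 2) (1 / (4 * c))"
  shows "slope_qc (maxf I H) (\<eta> / 6)"
proof -
  have \<eta>: "0 < \<eta>" "\<eta> \<le> \<epsilon> / 2" "c * \<eta> \<le> 1 / 4"
    using c \<epsilon> by (auto simp: \<eta>_def min_def field_simps)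
  have "slope_qc (maxf I H) (\<eta> / 3 / 2)"
    using tilt_error_bound_frontier_slope[OF tilt \<epsilon> c \<eta>] tilt_error_bound_near_frontier_slope[OF tilt \<epsilon> \<eta>]
      \<eta>(1) by (intro slope_qcI continuous_maxf) (auto simp: solset_eq)
  then show ?thesis
    by simp
qed

end

theorem theorem14:
  fixes I :: "'i::t2_space set" and F :: "'i \<Rightarrow> 'a::euclidean_space \<Rightarrow> real"
  assumes "compact I" and "I \<noteq> {}"
    and "\<And>i. i \<in> I \<Longrightarrow> convex_on UNIV (F i)"
    and "\<And>x. continuous_on I (\<lambda>i. F i x)"
  shows "((\<exists>\<tau>>0.
            (INF x\<in>frontier (solset I F). ereal \<bar>mindir (maxf I F) x\<bar>) > ereal \<tau> \<and>
            (\<forall>z :: nat \<Rightarrow> 'a. (\<forall>k. z k \<in> solset I F - frontier (solset I F)) \<and>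
                (\<exists>x :: nat \<Rightarrow> 'a. (\<forall>k. x k \<in> frontier (solset I F)) \<and>
                   ((\<lambda>k. (maxf I F (z k) - maxf I F (x k)) / norm (z k - x k)) \<longlonglongrightarrow> 0))
              \<longrightarrow> liminf (\<lambda>k. ereal \<bar>mindir (maxf I F) (z k)\<bar>) > ereal \<tau>))
         \<longleftrightarrow>
         (\<exists>c>0. \<exists>\<epsilon>>0. \<forall>G :: 'i \<Rightarrow> 'a \<Rightarrow> real.
            continuous_on (I \<times> UNIV) (\<lambda>(i, x). G i x) \<and>
            (\<forall>i\<in>I. convex_on UNIV (G i)) \<and>
            {z\<in>frontier (solset I F). \<forall>i\<in>I. F i z = G i z} \<noteq> {} \<and>
            (SUP i\<in>I. Lipc (\<lambda>x. F i x - G i x)) < ereal \<epsilon> \<and>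
            (\<forall>x. mindir (maxf I F) x < 0 \<longrightarrow> active I G x \<subseteq> active I F x) \<and>
            (\<forall>x. mindir (maxf I F) x > 0 \<longrightarrow> active I F x \<subseteq> active I G x)
            \<longrightarrow> tau_min I G \<le> ereal c))
      \<and>
        ((\<exists>c>0. \<exists>\<epsilon>>0. \<forall>G :: 'i \<Rightarrow> 'a \<Rightarrow> real.
            continuous_on (I \<times> UNIV) (\<lambda>(i, x). G i x) \<and>
            (\<forall>i\<in>I. convex_on UNIV (G i)) \<and>
            {z\<in>frontier (solset I F). \<forall>i\<in>I. F i z = G i z} \<noteq> {} \<and>
            (SUP i\<in>I. Lipc (\<lambda>x. F i x - G i x)) < ereal \<epsilon> \<and>
            (\<forall>x. mindir (maxf I F) x < 0 \<longrightarrow> active I G x \<subseteq> active I F x) \<and>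
            (\<forall>x. mindir (maxf I F) x > 0 \<longrightarrow> active I F x \<subseteq> active I G x)
            \<longrightarrow> tau_min I G \<le> ereal c)
         \<longleftrightarrow>
         (\<exists>c>0. \<exists>\<epsilon>>0. \<forall>xb\<in>frontier (solset I F). \<forall>u::'a. norm u \<le> 1 \<longrightarrow>
            tau_min I (\<lambda>i x. F i x + \<epsilon> * (u \<bullet> (x - xb))) \<le> ereal c))"
proof -
  interpret convex_family I F
    using assms by unfold_locales
  have tilt_imp_qc: "\<exists>\<tau>>0. slope_qc (maxf I F) \<tau>" if "tilt_error_bound I F c \<epsilon>" "c > 0" "\<epsilon> > 0" for c \<epsilon>
    using tilt_error_bound_imp_slope_qc[OF that] that(2,3) by (intro exI conjI) auto
  have qc_imp_perturbation: "\<exists>c>0. \<exists>\<epsilon>>0. perturbation_error_bound I F c \<epsilon>"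
    if "slope_qc (maxf I F) \<tau>" "\<tau> > 0" for \<tau>
    using slope_qc_imp_perturbation_error_bound[OF that] that(2) by (metis divide_pos_pos zero_less_numeral)
  have "(\<exists>\<tau>>0. slope_qc (maxf I F) \<tau>) \<longleftrightarrow> (\<exists>c>0. \<exists>\<epsilon>>0. perturbation_error_bound I F c \<epsilon>)"
    and "(\<exists>c>0. \<exists>\<epsilon>>0. perturbation_error_bound I F c \<epsilon>) \<longleftrightarrow> (\<exists>c>0. \<exists>\<epsilon>>0. tilt_error_bound I F c \<epsilon>)"
    using qc_imp_perturbation tilt_imp_qc perturbation_error_bound_imp_tilt_error_bound
    by (metis half_gt_zero)+
  then show ?thesis
    unfolding slope_qc_def perturbation_error_bound_def tilt_error_bound_def solset_eq
    by (rule conjI)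
qed

end
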